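(* Let $\Omega\subset\mathbb{R}^N$, $N\geq 3$, be bounded and open, $J=\{1,\dots,N\}$, $D_j=\partial/\partial x_j$. Assume $q>0$, $0<\theta<1$; $f\in L^1(\Omega)$, $f\geq0$, $f\not\equiv0$; $2\leq p_1\leq\dots\leq p_N$ with $2\leq\overline{p}:=N(\sum_{j}1/p_j)^{-1}<N$; $a,b$ measurable with $0<\alpha\leq a\leq\beta$, $0<\mu\leq b\leq\nu$. For each integer $n\geq1$ let $f_n=\mathcal{T}_n(f)$ and let $u_n\in W_0^{1,(p_j)}(\Omega)$, $u_n\geq0$, satisfy $$\sum_{j\in J}\int_\Omega[a(x)+u_n^q]|D_ju_n|^{p_j-2}D_ju_nD_j\varphi\,dx+\sum_{j\in J}\int_\Omega b(x)\frac{u_n|D_ju_n|^{p_j}}{(u_n+\frac1n)^{\theta+1}}\varphi\,dx=\int_\Omega f_n\varphi\,dx$$ for all $\varphi\in W_0^{1,(p_j)}(\Omega)\cap L^\infty(\Omega)$. Then for every $n\geq1$ and every $k>0$, $$\mu\sum_{j\in J}\int_\Omega\frac{u_n|D_ju_n|^{p_j}}{(u_n+\frac1n)^{\theta+1}}\,dx\leq\int_\Omega f\,dx,\qquad \frac1k\sum_{j\in J}\int_\Omega[a(x)+u_n^q]|D_j\mathcal{T}_k(u_n)|^{p_j}\,dx\leq\int_\Omega f\frac{\mathcal{T}_k(u_n)}{k}\,dx.$$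
   Context: $\mathcal{T}_k(l)=\max(-k,\min(l,k))$ is the truncation at level $k>0$. $W_0^{1,(p_j)}(\Omega)=\{v\in W_0^{1,1}(\Omega): D_jv\in L^{p_j}(\Omega)\ \forall j\}$. *)

theory Defs
  imports "HOL-Analysis.Analysis"
begin

definition trunc :: "real \<Rightarrow> real \<Rightarrow> real" where
  "trunc k l = max (- k) (min l k)"

definition pder :: "'n::finite \<Rightarrow> (real^'n \<Rightarrow> real) \<Rightarrow> (real^'n \<Rightarrow> real)" where
  "pder j \<phi> = (\<lambda>x. frechet_derivative \<phi> (at x) (axis j 1))"

definition smooth_fun :: "(real^'n::finite \<Rightarrow> real) \<Rightarrow> bool" where
  "smooth_fun \<phi> \<longleftrightarrow> (\<forall>js :: 'n list. (foldr pder js \<phi>) differentiable_on UNIV)"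

definition test_fun :: "(real^'n::finite) set \<Rightarrow> (real^'n \<Rightarrow> real) \<Rightarrow> bool" where
  "test_fun \<Omega> \<phi> \<longleftrightarrow> smooth_fun \<phi> \<and> compact (closure {x. \<phi> x \<noteq> 0})
      \<and> closure {x. \<phi> x \<noteq> 0} \<subseteq> \<Omega>"

definition loc_integrable :: "(real^'n::finite) set \<Rightarrow> (real^'n \<Rightarrow> real) \<Rightarrow> bool" where
  "loc_integrable \<Omega> u \<longleftrightarrow> (\<forall>K. compact K \<and> K \<subseteq> \<Omega> \<longrightarrow> set_integrable lebesgue K u)"

definition weak_pderiv :: "(real^'n::finite) set \<Rightarrow> 'n \<Rightarrow> (real^'n \<Rightarrow> real) \<Rightarrow> (real^'n \<Rightarrow> real) \<Rightarrow> bool" where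
  "weak_pderiv \<Omega> j u g \<longleftrightarrow> loc_integrable \<Omega> u \<and> loc_integrable \<Omega> g \<and>
     (\<forall>\<phi>. test_fun \<Omega> \<phi> \<longrightarrow>
        (LINT x:\<Omega>|lebesgue. u x * pder j \<phi> x) = - (LINT x:\<Omega>|lebesgue. g x * \<phi> x))"

definition Lp :: "(real^'n::finite) set \<Rightarrow> real \<Rightarrow> (real^'n \<Rightarrow> real) \<Rightarrow> bool" where
  "Lp \<Omega> p u \<longleftrightarrow> u \<in> borel_measurable (lebesgue_on \<Omega>) \<and>
     integrable (lebesgue_on \<Omega>) (\<lambda>x. \<bar>u x\<bar> powr p)"

definition Linf :: "(real^'n::finite) set \<Rightarrow> (real^'n \<Rightarrow> real) \<Rightarrow> bool" where
  "Linf \<Omega> u \<longleftrightarrow> u \<in> borel_measurable (lebesgue_on \<Omega>) \<and>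
     (\<exists>C. AE x in lebesgue_on \<Omega>. \<bar>u x\<bar> \<le> C)"

text \<open>u belongs to W_0^{1,1}(Omega) with weak gradient Du (closure of C_c^infinity in the
  W^{1,1} norm).\<close>
definition W011 :: "(real^'n::finite) set \<Rightarrow> (real^'n \<Rightarrow> real) \<Rightarrow> ('n \<Rightarrow> real^'n \<Rightarrow> real) \<Rightarrow> bool" where
  "W011 \<Omega> u Du \<longleftrightarrow> Lp \<Omega> 1 u \<and> (\<forall>j. Lp \<Omega> 1 (Du j) \<and> weak_pderiv \<Omega> j u (Du j)) \<and>
     (\<exists>\<phi> :: nat \<Rightarrow> real^'n \<Rightarrow> real. (\<forall>m. test_fun \<Omega> (\<phi> m)) \<and>
        (\<lambda>m. LINT x:\<Omega>|lebesgue. \<bar>\<phi> m x - u x\<bar>) \<longlonglongrightarrow> 0 \<and>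
        (\<forall>j. (\<lambda>m. LINT x:\<Omega>|lebesgue. \<bar>pder j (\<phi> m) x - Du j x\<bar>) \<longlonglongrightarrow> 0))"

definition W01p :: "(real^'n::finite) set \<Rightarrow> ('n \<Rightarrow> real) \<Rightarrow> (real^'n \<Rightarrow> real) \<Rightarrow> ('n \<Rightarrow> real^'n \<Rightarrow> real) \<Rightarrow> bool" where
  "W01p \<Omega> p u Du \<longleftrightarrow> W011 \<Omega> u Du \<and> (\<forall>j. Lp \<Omega> (p j) (Du j))"

end

theory Submission
  imports Defs
begin

text \<open>
  Both estimates come from testing the equation with \<open>trunc s (u n)\<close> for \<open>s > 0\<close>.
  This test function is admissible: \<open>trunc s u\<close> lies in \<open>W\<^sub>0\<^sup>1\<^sup>,\<^sup>(\<^sup>p\<^sup>)\<close> with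
  gradient \<open>Du\<close> on \<open>{|u| \<le> s}\<close> and \<open>0\<close> elsewhere. To see this, compose test functions
  \<open>\<phi>\<close> approximating \<open>u\<close> with polynomials \<open>Q\<close>, \<open>Q 0 = 0\<close>, whose derivative is uniformly
  close to a continuous cutoff of \<open>[-s, s]\<close>: the test functions \<open>Q \<circ> \<phi>\<close> converge to
  \<open>trunc s u\<close> in \<open>W\<^sup>1\<^sup>,\<^sup>1\<close>, and weak derivatives pass to the limit through integration
  by parts.

  After testing, the principal part is \<open>\<Sum>\<^sub>j \<integral> (a + u\<^sup>q) |D\<^sub>j trunc s u|\<^sup>p\<^sup>j \<ge> 0\<close>, the lower
  order part is nonnegative, and the right hand side is at most \<open>\<integral> f trunc s u\<close>.
  With \<open>s = k\<close> this is the second estimate. Dropping the principal part instead, dividing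
  by \<open>s\<close> and letting \<open>s \<rightarrow> 0\<close>, monotone convergence gives the first, because
  \<open>trunc s u / s\<close> increases to the indicator of \<open>{u > 0}\<close> and the lower order integrand
  vanishes where \<open>u = 0\<close>.
\<close>


section \<open>Smooth functions and test functions\<close>

lemma has_derivative_frechet_UNIV:
  "g differentiable_on UNIV \<Longrightarrow> (g has_derivative frechet_derivative g (at x)) (at x)"
  by (simp add: differentiable_on_def frechet_derivative_works)

lemma pder_eqI: "(g has_derivative g') (at x) \<Longrightarrow> pder j g x = g' (axis j 1)"
  by (simp add: pder_def frechet_derivative_at[symmetric])

lemma pder_const: "pder j (\<lambda>x. c) = (\<lambda>x. 0)"
  by (rule ext, rule pder_eqI) (rule has_derivative_const)

lemma pder_add:
  assumes "g differentiable_on UNIV" "h differentiable_on UNIV"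
  shows "pder j (\<lambda>x. g x + h x) = (\<lambda>x. pder j g x + pder j h x)"
proof
  fix x
  have "((\<lambda>x. g x + h x) has_derivative
      (\<lambda>v. frechet_derivative g (at x) v + frechet_derivative h (at x) v)) (at x)"
    using assms by (intro has_derivative_add has_derivative_frechet_UNIV)
  from pder_eqI[OF this] show "pder j (\<lambda>x. g x + h x) x = pder j g x + pder j h x"
    by (simp add: pder_def)
qed

lemma pder_mult:
  assumes "g differentiable_on UNIV" "h differentiable_on UNIV"
  shows "pder j (\<lambda>x. g x * h x) = (\<lambda>x. pder j g x * h x + g x * pder j h x)"
proof
  fix x
  have "((\<lambda>x. g x * h x) has_derivative
      (\<lambda>v. g x * frechet_derivative h (at x) v + frechet_derivative g (at x) v * h x)) (at x)"
    using assms by (intro has_derivative_mult has_derivative_frechet_UNIV)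
  from pder_eqI[OF this] show "pder j (\<lambda>x. g x * h x) x = pder j g x * h x + g x * pder j h x"
    by (simp add: pder_def)
qed

lemma pder_comp:
  assumes "\<And>t. (Q has_real_derivative Q' t) (at t)" and "g differentiable_on UNIV"
  shows "pder j (\<lambda>x. Q (g x)) x = Q' (g x) * pder j g x"
proof -
  have "(Q has_derivative (\<lambda>h. Q' (g x) * h)) (at (g x))"
    using assms(1) by (simp add: has_field_derivative_def)
  note diff_chain_at[OF has_derivative_frechet_UNIV[OF assms(2)] this]
  from pder_eqI[OF this[unfolded o_def]] show ?thesis
    by (simp add: pder_def)
qed

lemma eq_0_outside_closure_support: "x \<notin> closure {x. g x \<noteq> 0} \<Longrightarrow> g x = 0"
  using closure_subset[of "{x. g x \<noteq> 0}"] by auto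

lemma pder_eq_0_outside_support:
  assumes "x \<notin> closure {x. g x \<noteq> 0}"
  shows "pder j g x = 0"
proof -
  have "(g has_derivative (\<lambda>v. 0)) (at x)"
  proof (rule has_derivative_transform_within_open)
    show "((\<lambda>x. 0) has_derivative (\<lambda>v. 0)) (at x)"
      by (rule has_derivative_const)
    show "open (- closure {x. g x \<noteq> 0})" "x \<in> - closure {x. g x \<noteq> 0}"
      using assms by auto
    show "0 = g y" if "y \<in> - closure {x. g x \<noteq> 0}" for y
      using eq_0_outside_closure_support[of y g] that by simp
  qed
  then show ?thesis by (rule pder_eqI)
qed

text \<open>Smoothness up to order \<open>n\<close>, so that closure properties of \<open>smooth_fun\<close> can be
  proved by induction on the order.\<close>

definition smooth_upto :: "nat \<Rightarrow> (real^'n::finite \<Rightarrow> real) \<Rightarrow> bool" where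
  "smooth_upto n g \<longleftrightarrow> (\<forall>js::'n list. length js \<le> n \<longrightarrow> foldr pder js g differentiable_on UNIV)"

lemma smooth_fun_iff_smooth_upto: "smooth_fun g \<longleftrightarrow> (\<forall>n. smooth_upto n g)"
  unfolding smooth_fun_def smooth_upto_def by auto

lemma smooth_upto_0: "smooth_upto 0 g \<longleftrightarrow> g differentiable_on UNIV"
  by (simp add: smooth_upto_def)

lemma smooth_upto_Suc:
  "smooth_upto (Suc n) g \<longleftrightarrow> g differentiable_on UNIV \<and> (\<forall>j. smooth_upto n (pder j g))"
proof
  assume g: "smooth_upto (Suc n) g"
  show "g differentiable_on UNIV \<and> (\<forall>j. smooth_upto n (pder j g))"
  proof (intro conjI allI)
    show "g differentiable_on UNIV"
      using g[unfolded smooth_upto_def, rule_format, of "[]"] by simp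
    show "smooth_upto n (pder j g)" for j
      unfolding smooth_upto_def
    proof (intro allI impI)
      fix js :: "'a list"
      assume "length js \<le> n"
      then show "foldr pder js (pder j g) differentiable_on UNIV"
        using g[unfolded smooth_upto_def, rule_format, of "js @ [j]"] by simp
    qed
  qed
next
  assume g: "g differentiable_on UNIV \<and> (\<forall>j. smooth_upto n (pder j g))"
  show "smooth_upto (Suc n) g"
    unfolding smooth_upto_def
  proof (intro allI impI)
    fix js :: "'a list"
    assume "length js \<le> Suc n"
    then show "foldr pder js g differentiable_on UNIV"
      using g by (cases js rule: rev_cases) (simp_all add: smooth_upto_def)
  qed
qed

lemma smooth_upto_mono: "smooth_upto (Suc n) g \<Longrightarrow> smooth_upto n g"
  by (simp add: smooth_upto_def)

lemma smooth_upto_const: "smooth_upto n (\<lambda>x. c)"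
proof (induction n arbitrary: c)
  case 0
  then show ?case by (simp add: smooth_upto_0)
next
  case (Suc n)
  then show ?case by (simp add: smooth_upto_Suc pder_const)
qed

lemma smooth_upto_add: "smooth_upto n g \<Longrightarrow> smooth_upto n h \<Longrightarrow> smooth_upto n (\<lambda>x. g x + h x)"
proof (induction n arbitrary: g h)
  case 0
  then show ?case by (auto simp: smooth_upto_0 intro: differentiable_on_add)
next
  case (Suc n)
  then show ?case
    by (auto simp: smooth_upto_Suc pder_add intro: differentiable_on_add)
qed

lemma smooth_upto_mult: "smooth_upto n g \<Longrightarrow> smooth_upto n h \<Longrightarrow> smooth_upto n (\<lambda>x. g x * h x)"
proof (induction n arbitrary: g h)
  case 0
  then show ?case by (auto simp: smooth_upto_0 intro: differentiable_on_mult)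
next
  case (Suc n)
  have g: "g differentiable_on UNIV" "smooth_upto n g" "\<And>j. smooth_upto n (pder j g)"
    using Suc.prems(1) smooth_upto_mono[OF Suc.prems(1)] by (simp_all add: smooth_upto_Suc)
  have h: "h differentiable_on UNIV" "smooth_upto n h" "\<And>j. smooth_upto n (pder j h)"
    using Suc.prems(2) smooth_upto_mono[OF Suc.prems(2)] by (simp_all add: smooth_upto_Suc)
  have "smooth_upto n (pder j (\<lambda>x. g x * h x))" for j
    unfolding pder_mult[OF g(1) h(1)]
    by (rule smooth_upto_add; rule Suc.IH) (simp_all add: g h)
  then show ?case
    using g(1) h(1) by (simp add: smooth_upto_Suc differentiable_on_mult)
qed

lemma smooth_fun_const: "smooth_fun (\<lambda>x. c)"
  by (simp add: smooth_fun_iff_smooth_upto smooth_upto_const)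

lemma smooth_fun_add: "smooth_fun g \<Longrightarrow> smooth_fun h \<Longrightarrow> smooth_fun (\<lambda>x. g x + h x)"
  by (simp add: smooth_fun_iff_smooth_upto smooth_upto_add)

lemma smooth_fun_mult: "smooth_fun g \<Longrightarrow> smooth_fun h \<Longrightarrow> smooth_fun (\<lambda>x. g x * h x)"
  by (simp add: smooth_fun_iff_smooth_upto smooth_upto_mult)

lemma smooth_fun_sum:
  "(\<And>i. i \<in> I \<Longrightarrow> smooth_fun (g i)) \<Longrightarrow> smooth_fun (\<lambda>x. \<Sum>i\<in>I. g i x)"
  by (induction I rule: infinite_finite_induct) (auto simp: smooth_fun_const smooth_fun_add)

lemma smooth_fun_power: "smooth_fun g \<Longrightarrow> smooth_fun (\<lambda>x. g x ^ n)"
  by (induction n) (simp_all add: smooth_fun_const smooth_fun_mult)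

text \<open>Polynomials without constant term, so that composing them with a test function
  preserves the compact support.\<close>

definition poly0 :: "(nat \<Rightarrow> real) \<Rightarrow> nat \<Rightarrow> real \<Rightarrow> real" where
  "poly0 c N t = (\<Sum>i<N. c i * t ^ Suc i)"

definition poly0_deriv :: "(nat \<Rightarrow> real) \<Rightarrow> nat \<Rightarrow> real \<Rightarrow> real" where
  "poly0_deriv c N t = (\<Sum>i<N. c i * real (Suc i) * t ^ i)"

lemma poly0_has_real_derivative: "(poly0 c N has_real_derivative poly0_deriv c N t) (at t)"
  unfolding poly0_def[abs_def] poly0_deriv_def
  by (intro DERIV_sum) (use DERIV_cmult[OF DERIV_pow[of "Suc _"]] in \<open>simp add: mult.assoc\<close>)

lemma poly0_0 [simp]: "poly0 c N 0 = 0"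
  by (simp add: poly0_def)

lemma smooth_fun_differentiable: "smooth_fun g \<Longrightarrow> g differentiable_on UNIV"
  unfolding smooth_fun_iff_smooth_upto using smooth_upto_0 by blast

lemma smooth_fun_pder: "smooth_fun g \<Longrightarrow> smooth_fun (pder j g)"
  unfolding smooth_fun_iff_smooth_upto using smooth_upto_Suc by blast

lemma test_fun_differentiable: "test_fun \<Omega> \<phi> \<Longrightarrow> \<phi> differentiable_on UNIV"
  by (simp add: test_fun_def smooth_fun_differentiable)

lemma test_fun_pder_differentiable: "test_fun \<Omega> \<phi> \<Longrightarrow> pder j \<phi> differentiable_on UNIV"
  by (simp add: test_fun_def smooth_fun_differentiable smooth_fun_pder)

lemma test_fun_continuous: "test_fun \<Omega> \<phi> \<Longrightarrow> continuous_on UNIV \<phi>"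
  using test_fun_differentiable differentiable_imp_continuous_on by blast

lemma test_fun_pder_continuous: "test_fun \<Omega> \<phi> \<Longrightarrow> continuous_on UNIV (pder j \<phi>)"
  using test_fun_pder_differentiable differentiable_imp_continuous_on by blast

lemma test_fun_poly0:
  assumes "test_fun \<Omega> \<phi>"
  shows "test_fun \<Omega> (\<lambda>x. poly0 c N (\<phi> x))"
proof -
  have "smooth_fun (\<lambda>x. poly0 c N (\<phi> x))"
    using assms unfolding poly0_def test_fun_def
    by (intro smooth_fun_sum smooth_fun_mult smooth_fun_const smooth_fun_power) auto
  moreover have "closure {x. poly0 c N (\<phi> x) \<noteq> 0} \<subseteq> closure {x. \<phi> x \<noteq> 0}"
    by (rule closure_mono) auto
  moreover have "bounded {x. poly0 c N (\<phi> x) \<noteq> 0}"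
    using assms by (auto simp: test_fun_def intro: bounded_subset)
  ultimately show ?thesis
    using assms unfolding test_fun_def by auto
qed

lemma pder_poly0_comp:
  "test_fun \<Omega> \<phi> \<Longrightarrow> pder j (\<lambda>x. poly0 c N (\<phi> x)) x = poly0_deriv c N (\<phi> x) * pder j \<phi> x"
  by (rule pder_comp[OF poly0_has_real_derivative test_fun_differentiable])

lemma continuous_bounded_outside_compact:
  fixes g :: "'a::topological_space \<Rightarrow> real"
  assumes "continuous_on UNIV g" "compact K" "\<And>x. x \<notin> K \<Longrightarrow> g x = 0"
  obtains B where "\<And>x. \<bar>g x\<bar> \<le> B"
proof -
  have "bounded (g ` K)"
    using assms
    by (intro compact_imp_bounded compact_continuous_image) (auto intro: continuous_on_subset)
  then obtain B where "\<And>x. x \<in> K \<Longrightarrow> \<bar>g x\<bar> \<le> B"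
    unfolding bounded_real by blast
  then have "\<bar>g x\<bar> \<le> max B 0" for x
    using assms(3)[of x] by (cases "x \<in> K") force+
  then show ?thesis by (rule that)
qed

lemma test_fun_bounded:
  assumes "test_fun \<Omega> \<phi>"
  obtains B where "\<And>x. \<bar>\<phi> x\<bar> \<le> B"
proof (rule continuous_bounded_outside_compact[OF test_fun_continuous[OF assms]])
  show "compact (closure {x. \<phi> x \<noteq> 0})"
    using assms by (simp add: test_fun_def)
  show "\<And>x. x \<notin> closure {x. \<phi> x \<noteq> 0} \<Longrightarrow> \<phi> x = 0"
    by (rule eq_0_outside_closure_support)
qed (rule that)

lemma test_fun_pder_bounded:
  assumes "test_fun \<Omega> \<phi>"
  obtains B where "\<And>x. \<bar>pder j \<phi> x\<bar> \<le> B"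
proof (rule continuous_bounded_outside_compact[OF test_fun_pder_continuous[OF assms]])
  show "compact (closure {x. \<phi> x \<noteq> 0})"
    using assms by (simp add: test_fun_def)
  show "\<And>x. x \<notin> closure {x. \<phi> x \<noteq> 0} \<Longrightarrow> pder j \<phi> x = 0"
    by (rule pder_eq_0_outside_support)
qed (rule that)

section \<open>Integration by parts for test functions\<close>

lemma pder_line_has_real_derivative:
  fixes F :: "real^'n \<Rightarrow> real"
  assumes "F differentiable_on UNIV"
  shows "((\<lambda>s. F (x + s *\<^sub>R axis j 1)) has_real_derivative pder j F (x + s *\<^sub>R axis j 1)) (at s)"
proof -
  let ?y = "x + s *\<^sub>R axis j 1"
  have F: "(F has_derivative frechet_derivative F (at ?y)) (at ?y)"
    using assms by (rule has_derivative_frechet_UNIV)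
  have "((\<lambda>s. x + s *\<^sub>R axis j 1) has_derivative (\<lambda>h. h *\<^sub>R axis j 1)) (at s)"
    by (auto intro!: derivative_eq_intros)
  from diff_chain_at[OF this F]
  have "((\<lambda>s. F (x + s *\<^sub>R axis j 1)) has_derivative
      (\<lambda>h. frechet_derivative F (at ?y) (h *\<^sub>R axis j 1))) (at s)"
    by (simp add: o_def)
  moreover have "(\<lambda>h. frechet_derivative F (at ?y) (h *\<^sub>R axis j 1)) = (*) (pder j F ?y)"
    using linear_scale[OF has_derivative_linear[OF F]] by (auto simp: pder_def fun_eq_iff)
  ultimately show ?thesis
    by (simp add: has_field_derivative_def)
qed

lemma difference_quotient_bounded:
  fixes F :: "real^'n \<Rightarrow> real"
  assumes "F differentiable_on UNIV" "\<And>x. \<bar>pder j F x\<bar> \<le> B" "t > 0"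
  shows "\<bar>(F (x + t *\<^sub>R axis j 1) - F x) / t\<bar> \<le> B"
proof -
  obtain z where
    "F (x + t *\<^sub>R axis j 1) - F (x + 0 *\<^sub>R axis j 1) = (t - 0) * pder j F (x + z *\<^sub>R axis j 1)"
    using MVT2[of 0 t "\<lambda>s. F (x + s *\<^sub>R axis j 1)" "\<lambda>s. pder j F (x + s *\<^sub>R axis j 1)"]
      pder_line_has_real_derivative[OF assms(1)] assms(3) by blast
  then show ?thesis
    using assms(2,3) by (simp add: abs_div_pos)
qed

lemma integrable_continuous_compact_support:
  fixes g :: "real^'n \<Rightarrow> real"
  assumes "continuous_on UNIV g" "compact K" "\<And>x. x \<notin> K \<Longrightarrow> g x = 0"
  shows "integrable lborel g"
proof -
  obtain B where B: "\<And>x. \<bar>g x\<bar> \<le> B"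
    by (rule continuous_bounded_outside_compact[OF assms]) blast+
  have "integrable lborel (\<lambda>x. B * indicator K x)"
    using emeasure_bounded_finite[OF compact_imp_bounded[OF assms(2)]] assms(2)
    by (intro integrable_mult_right integrable_real_indicator) (auto simp: compact_imp_closed)
  then show ?thesis
  proof (rule Bochner_Integration.integrable_bound)
    show "g \<in> borel_measurable lborel"
      using borel_measurable_continuous_onI[OF assms(1)] by simp
    show "AE x in lborel. norm (g x) \<le> norm (B * indicator K x)"
    proof (intro AE_I2)
      show "norm (g x) \<le> norm (B * indicator K x)" for x
        using B[of x] assms(3)[of x] by (cases "x \<in> K") auto
    qed
  qed
qed

lemma integral_lborel_translate:
  fixes F :: "'a::euclidean_space \<Rightarrow> real"
  assumes "F \<in> borel_measurable borel"
  shows "integral\<^sup>L lborel (\<lambda>x. F (x + c)) = integral\<^sup>L lborel F"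
  using integral_distr[of "(+) c" lborel borel F] assms by (simp add: lborel_distr_plus add.commute)

lemma integrable_lborel_translate:
  fixes F :: "'a::euclidean_space \<Rightarrow> real"
  assumes "integrable lborel F"
  shows "integrable lborel (\<lambda>x. F (x + c))"
  using assms integrable_distr_eq[of "(+) c" lborel borel F]
  by (simp add: lborel_distr_plus add.commute)

lemma integral_difference_quotient_eq_0:
  fixes F :: "'a::euclidean_space \<Rightarrow> real"
  assumes "integrable lborel F"
  shows "integral\<^sup>L lborel (\<lambda>x. (F (x + c) - F x) / t) = 0"
proof -
  have "integral\<^sup>L lborel (\<lambda>x. (F (x + c) - F x) / t)
      = (integral\<^sup>L lborel (\<lambda>x. F (x + c)) - integral\<^sup>L lborel F) / t"
    using integrable_lborel_translate[OF assms] assms by simp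
  then show ?thesis
    using integral_lborel_translate[of F c] borel_measurable_integrable[OF assms] by simp
qed

lemma difference_quotient_tendsto_pder:
  fixes F :: "real^'n \<Rightarrow> real"
  assumes "F differentiable_on UNIV"
  shows "(\<lambda>m. (F (x + inverse (real (Suc m)) *\<^sub>R axis j 1) - F x) / inverse (real (Suc m)))
    \<longlonglongrightarrow> pder j F x"
proof -
  have "((\<lambda>s. (F (x + s *\<^sub>R axis j 1) - F x) / s) \<longlongrightarrow> pder j F x) (at 0)"
    using pder_line_has_real_derivative[OF assms, of x j 0] by (simp add: has_field_derivative_iff)
  moreover have "filterlim (\<lambda>m. inverse (real (Suc m))) (at 0) sequentially"
    unfolding filterlim_at using LIMSEQ_inverse_real_of_nat by (auto intro!: always_eventually)
  ultimately show ?thesis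
    by (rule filterlim_compose)
qed

text \<open>The difference quotients in direction \<open>j\<close> all have integral zero by translation
  invariance of Lebesgue measure, and they converge to the derivative under a common
  integrable bound.\<close>

lemma integral_pder_eq_0:
  fixes F :: "real^'n \<Rightarrow> real"
  assumes F: "F differentiable_on UNIV" and dF: "continuous_on UNIV (pder j F)"
    and K: "compact K" and F0: "\<And>x. x \<notin> K \<Longrightarrow> F x = 0"
  shows "integral\<^sup>L lborel (pder j F) = 0"
proof -
  let ?e = "axis j 1 :: real^'n"
  define t where "t m = inverse (real (Suc m))" for m
  define D where "D m x = (F (x + t m *\<^sub>R ?e) - F x) / t m" for m x
  have t: "0 < t m" "t m \<le> 1" for m
    by (auto simp: t_def inverse_le_1_iff)
  have FI: "integrable lborel F"
    using integrable_continuous_compact_support[OF differentiable_imp_continuous_on[OF F] K F0] .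
  have "closure {x. F x \<noteq> 0} \<subseteq> K"
    using F0 by (intro closure_minimal compact_imp_closed K) auto
  then have dF0: "pder j F x = 0" if "x \<notin> K" for x
    using that by (intro pder_eq_0_outside_support) auto
  obtain B where B: "\<And>x. \<bar>pder j F x\<bar> \<le> B"
    by (rule continuous_bounded_outside_compact[OF dF K dF0]) blast+
  obtain R where R: "\<And>x. x \<in> K \<Longrightarrow> norm x \<le> R"
    using compact_imp_bounded[OF K] by (auto simp: bounded_iff)
  have "integral\<^sup>L lborel (D m) = 0" for m
    unfolding D_def[abs_def] using FI by (rule integral_difference_quotient_eq_0)
  moreover have "(\<lambda>m. integral\<^sup>L lborel (D m)) \<longlonglongrightarrow> integral\<^sup>L lborel (pder j F)"
  proof (rule integral_dominated_convergence[where w = "\<lambda>x. B * indicator (cball 0 (R + 1)) x"])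
    show "integrable lborel (\<lambda>x::real^'n. B * indicator (cball 0 (R + 1)) x)"
      using emeasure_lborel_cball_finite[of 0 "R + 1"]
      by (intro integrable_mult_right integrable_real_indicator) auto
    show "pder j F \<in> borel_measurable lborel"
      using borel_measurable_continuous_onI[OF dF] by simp
    show "D m \<in> borel_measurable lborel" for m
      unfolding D_def[abs_def] using borel_measurable_integrable[OF FI] by measurable
    show "AE x in lborel. (\<lambda>m. D m x) \<longlonglongrightarrow> pder j F x"
      unfolding D_def t_def using difference_quotient_tendsto_pder[OF F] by simp
    show "AE x in lborel. norm (D m x) \<le> B * indicator (cball 0 (R + 1)) x" for m
    proof (intro AE_I2)
      fix x :: "real^'n"
      show "norm (D m x) \<le> B * indicator (cball 0 (R + 1)) x"
      proof (cases "norm x \<le> R + 1")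
        case True
        then show ?thesis
          using difference_quotient_bounded[OF F B t(1), of x m] by (simp add: D_def)
      next
        case False
        have "norm (t m *\<^sub>R ?e) = t m"
          using t[of m] by simp
        then have "norm (x + t m *\<^sub>R ?e) \<ge> norm x - t m"
          using norm_diff_ineq[of x "t m *\<^sub>R ?e"] by linarith
        then have "x \<notin> K" "x + t m *\<^sub>R ?e \<notin> K"
          using False R[of x] R[of "x + t m *\<^sub>R ?e"] t[of m] by auto
        then show ?thesis
          using False by (simp add: D_def F0)
      qed
    qed
  qed
  ultimately show ?thesis
    by (simp add: LIMSEQ_const_iff)
qed

lemma integral_lebesgue_on_eq_lborel:
  fixes h :: "real^'n \<Rightarrow> real"
  assumes "\<Omega> \<in> sets lebesgue" "h \<in> borel_measurable lborel" "\<And>x. x \<notin> \<Omega> \<Longrightarrow> h x = 0"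
  shows "integral\<^sup>L (lebesgue_on \<Omega>) h = integral\<^sup>L lborel h"
proof -
  have "integral\<^sup>L (lebesgue_on \<Omega>) h = integral\<^sup>L lebesgue (\<lambda>x. indicator \<Omega> x *\<^sub>R h x)"
    by (rule integral_restrict_space) (use assms(1) in simp)
  also have "(\<lambda>x. indicator \<Omega> x *\<^sub>R h x) = h"
  proof
    show "indicator \<Omega> x *\<^sub>R h x = h x" for x
      using assms(3)[of x] by (cases "x \<in> \<Omega>") simp_all
  qed
  also have "integral\<^sup>L lebesgue h = integral\<^sup>L lborel h"
    using assms(2) by (rule integral_completion)
  finally show ?thesis .
qed

lemma test_fun_integration_by_parts:
  fixes \<psi> \<eta> :: "real^'n \<Rightarrow> real"
  assumes \<Omega>: "\<Omega> \<in> sets lebesgue" and \<psi>: "test_fun \<Omega> \<psi>" and \<eta>: "test_fun \<Omega> \<eta>"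
  shows "integral\<^sup>L (lebesgue_on \<Omega>) (\<lambda>x. \<psi> x * pder j \<eta> x) =
    - integral\<^sup>L (lebesgue_on \<Omega>) (\<lambda>x. pder j \<psi> x * \<eta> x)"
proof -
  let ?K = "closure {x. \<psi> x \<noteq> 0}"
  let ?A = "\<lambda>x. pder j \<psi> x * \<eta> x" and ?B = "\<lambda>x. \<psi> x * pder j \<eta> x"
  have K: "compact ?K" "?K \<subseteq> \<Omega>"
    using \<psi> by (auto simp: test_fun_def)
  have A0: "?A x = 0" and B0: "?B x = 0" if "x \<notin> ?K" for x
    using that eq_0_outside_closure_support pder_eq_0_outside_support by auto
  then have "?A x = 0" "?B x = 0" if "x \<notin> \<Omega>" for x
    using that K(2) by auto
  have A: "continuous_on UNIV ?A" and B: "continuous_on UNIV ?B"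
    using test_fun_continuous[OF \<psi>] test_fun_continuous[OF \<eta>]
      test_fun_pder_continuous[OF \<psi>] test_fun_pder_continuous[OF \<eta>]
    by (auto intro: continuous_on_mult)
  have AI: "integrable lborel ?A" and BI: "integrable lborel ?B"
    using A0 B0 by (auto intro: integrable_continuous_compact_support[OF A K(1)]
        integrable_continuous_compact_support[OF B K(1)])
  have d: "\<psi> differentiable_on UNIV" "\<eta> differentiable_on UNIV"
    using \<psi> \<eta> by (auto intro: test_fun_differentiable)
  have "integral\<^sup>L lborel (pder j (\<lambda>x. \<psi> x * \<eta> x)) = 0"
  proof (rule integral_pder_eq_0[OF _ _ K(1)])
    show "(\<lambda>x. \<psi> x * \<eta> x) differentiable_on UNIV"
      using d by (rule differentiable_on_mult)
    show "continuous_on UNIV (pder j (\<lambda>x. \<psi> x * \<eta> x))"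
      unfolding pder_mult[OF d] using A B by (rule continuous_on_add)
  qed (use eq_0_outside_closure_support in auto)
  then have "integral\<^sup>L lborel ?A + integral\<^sup>L lborel ?B = 0"
    using AI BI by (simp add: pder_mult[OF d])
  moreover have "integral\<^sup>L (lebesgue_on \<Omega>) ?A = integral\<^sup>L lborel ?A"
    "integral\<^sup>L (lebesgue_on \<Omega>) ?B = integral\<^sup>L lborel ?B"
    using A B \<open>\<And>x. x \<notin> \<Omega> \<Longrightarrow> ?A x = 0\<close> \<open>\<And>x. x \<notin> \<Omega> \<Longrightarrow> ?B x = 0\<close>
    by (auto intro!: integral_lebesgue_on_eq_lborel[OF \<Omega>] borel_measurable_continuous_onI)
  ultimately show ?thesis by linarith
qed

section \<open>Truncation of Sobolev functions\<close>

lemma abs_trunc_le: "k > 0 \<Longrightarrow> \<bar>trunc k t\<bar> \<le> \<bar>t\<bar>" "k > 0 \<Longrightarrow> \<bar>trunc k t\<bar> \<le> k"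
  by (auto simp: trunc_def)

lemma trunc_lipschitz: "\<bar>trunc k a - trunc k b\<bar> \<le> \<bar>a - b\<bar>"
  by (simp add: trunc_def max_def min_def abs_if)

lemma trunc_minus: "k \<ge> 0 \<Longrightarrow> trunc k (- t) = - trunc k t"
  by (simp add: trunc_def max_def min_def)

lemma trunc_bounds_of_nonneg: "k > 0 \<Longrightarrow> t \<ge> 0 \<Longrightarrow> 0 \<le> trunc k t \<and> trunc k t \<le> k \<and> trunc k t \<le> t"
  by (auto simp: trunc_def)

text \<open>A continuous substitute for the indicator of \<open>[-k, k]\<close>; a primitive of it is
  \<open>\<epsilon>\<close>-close to \<open>trunc k\<close>.\<close>

definition cutoff :: "real \<Rightarrow> real \<Rightarrow> real \<Rightarrow> real" where
  "cutoff k \<epsilon> t = max 0 (min 1 ((k + \<epsilon> - \<bar>t\<bar>) / \<epsilon>))"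

lemma cutoff_bounds: "0 \<le> cutoff k \<epsilon> t" "cutoff k \<epsilon> t \<le> 1"
  by (auto simp: cutoff_def)

lemma cutoff_eq_1: "\<epsilon> > 0 \<Longrightarrow> \<bar>t\<bar> \<le> k \<Longrightarrow> cutoff k \<epsilon> t = 1"
  by (auto simp: cutoff_def field_simps)

lemma cutoff_eq_0: "\<epsilon> > 0 \<Longrightarrow> k + \<epsilon> \<le> \<bar>t\<bar> \<Longrightarrow> cutoff k \<epsilon> t = 0"
  by (auto simp: cutoff_def divide_nonpos_pos)

lemma cutoff_minus: "cutoff k \<epsilon> (- t) = cutoff k \<epsilon> t"
  by (simp add: cutoff_def)

lemma continuous_on_cutoff: "\<epsilon> > 0 \<Longrightarrow> continuous_on UNIV (cutoff k \<epsilon>)"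
  unfolding cutoff_def[abs_def] by (intro continuous_intros) auto

lemma DERIV_close_diff_bounds:
  assumes "a \<le> b" "\<And>s. a \<le> s \<Longrightarrow> s \<le> b \<Longrightarrow> (f has_real_derivative f' s) (at s)"
    and "\<And>s. a \<le> s \<Longrightarrow> s \<le> b \<Longrightarrow> \<bar>f' s - g s\<bar> \<le> \<delta>"
    and "\<And>s. a \<le> s \<Longrightarrow> s \<le> b \<Longrightarrow> lo \<le> g s \<and> g s \<le> hi"
  shows "(lo - \<delta>) * (b - a) \<le> f b - f a \<and> f b - f a \<le> (hi + \<delta>) * (b - a)"
proof (cases "a = b")
  case False
  then obtain z where z: "a < z" "z < b" "f b - f a = (b - a) * f' z"
    using MVT2[of a b f f'] assms(1,2) by auto
  then have "lo - \<delta> \<le> f' z" "f' z \<le> hi + \<delta>"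
    using assms(3)[of z] assms(4)[of z] by (auto simp: abs_le_iff)
  moreover have "0 \<le> b - a"
    using assms(1) by simp
  ultimately have "(lo - \<delta>) * (b - a) \<le> f' z * (b - a)" "f' z * (b - a) \<le> (hi + \<delta>) * (b - a)"
    by (auto intro: mult_right_mono)
  then show ?thesis
    using z(3) by (simp add: mult.commute)
qed simp

lemma primitive_close_to_trunc_nonneg:
  assumes Q: "\<And>s. (Q has_real_derivative Q' s) (at s)" "Q 0 = 0"
    and k: "k > 0" and \<epsilon>: "\<epsilon> > 0"
    and Q': "\<And>s. 0 \<le> s \<Longrightarrow> s \<le> M \<Longrightarrow> \<bar>Q' s - cutoff k \<epsilon> s\<bar> \<le> \<delta>"
    and t: "0 \<le> t" "t \<le> M"
  shows "\<bar>Q t - trunc k t\<bar> \<le> \<delta> * t + \<epsilon>"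
proof -
  have \<delta>: "\<delta> \<ge> 0"
    using Q'[of 0] t by linarith
  have below_k: "(1 - \<delta>) * (b - 0) \<le> Q b - Q 0 \<and> Q b - Q 0 \<le> (1 + \<delta>) * (b - 0)"
    if "0 \<le> b" "b \<le> k" "b \<le> M" for b
    using that cutoff_eq_1[OF \<epsilon>, of _ k]
    by (intro DERIV_close_diff_bounds[where g = "cutoff k \<epsilon>", OF that(1) Q(1)] Q') auto
  have anywhere: "(0 - \<delta>) * (b - a) \<le> Q b - Q a \<and> Q b - Q a \<le> (1 + \<delta>) * (b - a)"
    if "0 \<le> a" "a \<le> b" "b \<le> M" for a b
    using that cutoff_bounds[of k \<epsilon>]
    by (intro DERIV_close_diff_bounds[where g = "cutoff k \<epsilon>", OF that(2) Q(1)] Q') auto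
  have beyond: "(0 - \<delta>) * (b - a) \<le> Q b - Q a \<and> Q b - Q a \<le> (0 + \<delta>) * (b - a)"
    if "k + \<epsilon> \<le> a" "a \<le> b" "b \<le> M" for a b
    using that cutoff_eq_0[OF \<epsilon>, of k] k \<epsilon>
    by (intro DERIV_close_diff_bounds[where g = "cutoff k \<epsilon>", OF that(2) Q(1)] Q') auto
  show ?thesis
  proof (cases "t \<le> k")
    case True
    then show ?thesis
      using below_k[of t] t \<epsilon> Q(2) by (simp add: trunc_def abs_le_iff algebra_simps)
  next
    case False
    then have "trunc k t = k" "(1 - \<delta>) * k \<le> Q k \<and> Q k \<le> (1 + \<delta>) * k"
      using below_k[of k] k t Q(2) by (auto simp: trunc_def)
    moreover have "- \<delta> * (min t (k + \<epsilon>) - k) \<le> Q (min t (k + \<epsilon>)) - Q k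
        \<and> Q (min t (k + \<epsilon>)) - Q k \<le> (1 + \<delta>) * (min t (k + \<epsilon>) - k)"
      using anywhere[of k "min t (k + \<epsilon>)"] False k t \<epsilon> by auto
    moreover have "- \<delta> * (t - min t (k + \<epsilon>)) \<le> Q t - Q (min t (k + \<epsilon>))
        \<and> Q t - Q (min t (k + \<epsilon>)) \<le> \<delta> * (t - min t (k + \<epsilon>))"
      using beyond[of "min t (k + \<epsilon>)" t] t by (cases "t \<le> k + \<epsilon>") auto
    ultimately show ?thesis
      using False \<delta> \<epsilon> t by (cases "t \<le> k + \<epsilon>") (simp_all add: abs_le_iff algebra_simps)
  qed
qed

lemma primitive_close_to_trunc:
  assumes Q: "\<And>s. (Q has_real_derivative Q' s) (at s)" "Q 0 = 0"
    and k: "k > 0" and \<epsilon>: "\<epsilon> > 0"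
    and Q': "\<And>s. \<bar>s\<bar> \<le> M \<Longrightarrow> \<bar>Q' s - cutoff k \<epsilon> s\<bar> \<le> \<delta>"
    and t: "\<bar>t\<bar> \<le> M"
  shows "\<bar>Q t - trunc k t\<bar> \<le> \<delta> * \<bar>t\<bar> + \<epsilon>"
proof (cases "t \<ge> 0")
  case True
  then show ?thesis
    using primitive_close_to_trunc_nonneg[OF Q k \<epsilon>, of M \<delta> t] Q' t by simp
next
  case False
  have "((\<lambda>s. Q (- s)) has_real_derivative - Q' (- s)) (at s)" for s
    using DERIV_mirror[of Q "Q' (- s)" s] Q(1)[of "- s"] by simp
  then have "((\<lambda>s. - Q (- s)) has_real_derivative Q' (- s)) (at s)" for s
    using DERIV_minus by fastforce
  moreover have "\<bar>Q' (- s) - cutoff k \<epsilon> s\<bar> \<le> \<delta>" if "0 \<le> s" "s \<le> M" for s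
    using Q'[of "- s"] that cutoff_minus[of k \<epsilon> s] by simp
  ultimately have "\<bar>- Q (- (- t)) - trunc k (- t)\<bar> \<le> \<delta> * (- t) + \<epsilon>"
    using primitive_close_to_trunc_nonneg[of "\<lambda>s. - Q (- s)" "\<lambda>s. Q' (- s)" k \<epsilon> M \<delta> "- t"]
      Q(2) k \<epsilon> False t by simp
  then show ?thesis
    using False trunc_minus[of k t] k by (simp add: abs_minus_commute)
qed

lemma poly0_deriv_uniform_approx:
  assumes "continuous_on {-B..B} g" "\<delta> > 0"
  obtains c N where "\<And>s. \<bar>s\<bar> \<le> B \<Longrightarrow> \<bar>poly0_deriv c N s - g s\<bar> \<le> \<delta>"
proof -
  obtain P where P: "real_polynomial_function P" "\<And>s. s \<in> {-B..B} \<Longrightarrow> \<bar>g s - P s\<bar> < \<delta>"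
    using Stone_Weierstrass_real_polynomial_function[OF compact_Icc assms] by blast
  obtain a n where P_eq: "P = (\<lambda>x. \<Sum>i\<le>n. a i * x ^ i)"
    using P(1) unfolding real_polynomial_function_iff_sum by blast
  have "poly0_deriv (\<lambda>i. a i / real (Suc i)) (Suc n) s = P s" for s
    unfolding poly0_deriv_def P_eq lessThan_Suc_atMost[symmetric] by (intro sum.cong) auto
  moreover have "\<bar>P s - g s\<bar> \<le> \<delta>" if "\<bar>s\<bar> \<le> B" for s
    using P(2)[of s] that
    by (metis abs_le_iff abs_minus_commute atLeastAtMost_iff less_imp_le minus_le_iff)
  ultimately show ?thesis
    by (intro that[of "\<lambda>i. a i / real (Suc i)" "Suc n"]) simp
qed

lemma integrable_mult_bounded:
  fixes f h :: "'a \<Rightarrow> real"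
  assumes "integrable M f" "h \<in> borel_measurable M" "\<And>x. \<bar>h x\<bar> \<le> B"
  shows "integrable M (\<lambda>x. f x * h x)"
proof (rule Bochner_Integration.integrable_bound)
  show "integrable M (\<lambda>x. B * \<bar>f x\<bar>)"
    using assms(1) by (intro integrable_mult_right integrable_abs)
  show "(\<lambda>x. f x * h x) \<in> borel_measurable M"
    using borel_measurable_integrable[OF assms(1)] assms(2) by measurable
  show "AE x in M. norm (f x * h x) \<le> norm (B * \<bar>f x\<bar>)"
  proof (intro AE_I2)
    fix x
    have "\<bar>f x\<bar> * \<bar>h x\<bar> \<le> \<bar>f x\<bar> * B"
      using assms(3) by (intro mult_left_mono) auto
    then show "norm (f x * h x) \<le> norm (B * \<bar>f x\<bar>)"
      using assms(3)[of x] by (simp add: abs_mult mult.commute)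
  qed
qed

lemma integral_abs_le_pointwise:
  fixes f g :: "'a \<Rightarrow> real"
  assumes "integrable M g" "f \<in> borel_measurable M" "\<And>x. x \<in> space M \<Longrightarrow> \<bar>f x\<bar> \<le> g x"
  shows "integral\<^sup>L M (\<lambda>x. \<bar>f x\<bar>) \<le> integral\<^sup>L M g"
proof (rule integral_mono)
  show "integrable M (\<lambda>x. \<bar>f x\<bar>)"
  proof (rule Bochner_Integration.integrable_bound[OF assms(1)])
    show "AE x in M. norm \<bar>f x\<bar> \<le> norm (g x)"
      using assms(3) by (intro AE_I2) force
  qed (use assms(2) in simp)
qed (use assms in auto)

lemma integral_bounded_factor_tendsto_0:
  fixes h :: "nat \<Rightarrow> 'a \<Rightarrow> real"
  assumes "integrable M D" "\<And>i. h i \<in> borel_measurable M" "\<And>i x. \<bar>h i x\<bar> \<le> 1"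
    and "AE x in M. (\<lambda>i. h i x) \<longlonglongrightarrow> 0"
  shows "(\<lambda>i. integral\<^sup>L M (\<lambda>x. \<bar>h i x\<bar> * \<bar>D x\<bar>)) \<longlonglongrightarrow> 0"
proof -
  have "(\<lambda>i. integral\<^sup>L M (\<lambda>x. \<bar>h i x\<bar> * \<bar>D x\<bar>)) \<longlonglongrightarrow> integral\<^sup>L M (\<lambda>x. 0)"
  proof (rule integral_dominated_convergence[where w = "\<lambda>x. \<bar>D x\<bar>"])
    show "(\<lambda>x. \<bar>h i x\<bar> * \<bar>D x\<bar>) \<in> borel_measurable M" for i
      using assms(2)[of i] borel_measurable_integrable[OF assms(1)] by measurable
    show "AE x in M. (\<lambda>i. \<bar>h i x\<bar> * \<bar>D x\<bar>) \<longlonglongrightarrow> 0"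
      using assms(4) by eventually_elim (intro tendsto_mult_left_zero tendsto_rabs_zero)
    show "AE x in M. norm (\<bar>h i x\<bar> * \<bar>D x\<bar>) \<le> \<bar>D x\<bar>" for i
    proof (intro AE_I2)
      fix x
      show "norm (\<bar>h i x\<bar> * \<bar>D x\<bar>) \<le> \<bar>D x\<bar>"
        using mult_right_mono[OF assms(3)[of i x], of "\<bar>D x\<bar>"] by simp
    qed
  qed (use assms(1) in auto)
  then show ?thesis
    by simp
qed

lemma cutoff_tendsto_indicator:
  assumes "k > 0"
  shows "(\<lambda>i. cutoff k (inverse (real (Suc i))) t) \<longlonglongrightarrow> (if \<bar>t\<bar> \<le> k then 1 else 0)"
proof (cases "\<bar>t\<bar> \<le> k")
  case True
  then show ?thesis
    by (simp add: cutoff_eq_1)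
next
  case False
  then have "eventually (\<lambda>i. inverse (real (Suc i)) < \<bar>t\<bar> - k) sequentially"
    by (intro order_tendstoD(2)[OF LIMSEQ_inverse_real_of_nat]) simp
  then have "eventually (\<lambda>i. cutoff k (inverse (real (Suc i))) t = 0) sequentially"
    by eventually_elim (simp add: cutoff_eq_0)
  then show ?thesis
    using False by (simp add: tendsto_eventually)
qed

lemma cutoff_L1_approx_indicator:
  fixes u :: "'a \<Rightarrow> real" and Du :: "'j::finite \<Rightarrow> 'a \<Rightarrow> real"
  assumes "finite_measure M" "k > 0" "e > 0" "u \<in> borel_measurable M" "\<And>j. integrable M (Du j)"
  obtains \<epsilon> where "\<epsilon> > 0" "\<epsilon> * measure M (space M) < e"
    "\<And>j. integral\<^sup>L M (\<lambda>x. \<bar>cutoff k \<epsilon> (u x) - (if \<bar>u x\<bar> \<le> k then 1 else 0)\<bar> * \<bar>Du j x\<bar>) < e"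
proof -
  define \<epsilon> where "\<epsilon> i = inverse (real (Suc i))" for i
  have "(\<lambda>i. integral\<^sup>L M (\<lambda>x. \<bar>cutoff k (\<epsilon> i) (u x) - (if \<bar>u x\<bar> \<le> k then 1 else 0)\<bar> * \<bar>Du j x\<bar>))
      \<longlonglongrightarrow> 0" for j
  proof (rule integral_bounded_factor_tendsto_0[OF assms(5)])
    show "(\<lambda>x. cutoff k (\<epsilon> i) (u x) - (if \<bar>u x\<bar> \<le> k then 1 else 0)) \<in> borel_measurable M" for i
      unfolding cutoff_def using assms(4) by measurable
    show "\<bar>cutoff k (\<epsilon> i) t - (if \<bar>t\<bar> \<le> k then 1 else 0)\<bar> \<le> 1" for i t
      using cutoff_bounds[of k "\<epsilon> i" t] by auto
    show "AE x in M. (\<lambda>i. cutoff k (\<epsilon> i) (u x) - (if \<bar>u x\<bar> \<le> k then 1 else 0)) \<longlonglongrightarrow> 0"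
      unfolding \<epsilon>_def using cutoff_tendsto_indicator[OF assms(2)] by (intro AE_I2 LIM_zero)
  qed
  then have "\<forall>\<^sub>F i in sequentially. \<forall>j.
      integral\<^sup>L M (\<lambda>x. \<bar>cutoff k (\<epsilon> i) (u x) - (if \<bar>u x\<bar> \<le> k then 1 else 0)\<bar> * \<bar>Du j x\<bar>) < e"
    using assms(3) by (intro eventually_all_finite order_tendstoD(2)) auto
  moreover have "(\<lambda>i. \<epsilon> i * measure M (space M)) \<longlonglongrightarrow> 0"
    unfolding \<epsilon>_def by (intro tendsto_mult_left_zero LIMSEQ_inverse_real_of_nat)
  then have "\<forall>\<^sub>F i in sequentially. \<epsilon> i * measure M (space M) < e"
    using assms(3) by (rule order_tendstoD(2))
  ultimately obtain i where "\<forall>j. integral\<^sup>L M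
      (\<lambda>x. \<bar>cutoff k (\<epsilon> i) (u x) - (if \<bar>u x\<bar> \<le> k then 1 else 0)\<bar> * \<bar>Du j x\<bar>) < e"
    "\<epsilon> i * measure M (space M) < e"
    using eventually_happens'[OF trivial_limit_sequentially eventually_conj] by blast
  then show ?thesis
    by (intro that[of "\<epsilon> i"]) (auto simp: \<epsilon>_def)
qed

lemma L1_approx_with_cutoff:
  fixes \<phi> :: "nat \<Rightarrow> 'a \<Rightarrow> real" and d\<phi> :: "nat \<Rightarrow> 'j::finite \<Rightarrow> 'a \<Rightarrow> real"
  assumes \<phi>: "\<And>m. integrable M (\<phi> m)" and u: "integrable M u" and Du: "\<And>j. integrable M (Du j)"
    and \<phi>_lim: "(\<lambda>m. integral\<^sup>L M (\<lambda>x. \<bar>\<phi> m x - u x\<bar>)) \<longlonglongrightarrow> 0"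
    and d\<phi>_lim: "\<And>j. (\<lambda>m. integral\<^sup>L M (\<lambda>x. \<bar>d\<phi> m j x - Du j x\<bar>)) \<longlonglongrightarrow> 0"
    and "\<epsilon> > 0" "e > 0"
  obtains m where "integral\<^sup>L M (\<lambda>x. \<bar>\<phi> m x - u x\<bar>) < e"
    "\<And>j. integral\<^sup>L M (\<lambda>x. \<bar>d\<phi> m j x - Du j x\<bar>) < e"
    "\<And>j. integral\<^sup>L M (\<lambda>x. \<bar>cutoff k \<epsilon> (\<phi> m x) - cutoff k \<epsilon> (u x)\<bar> * \<bar>Du j x\<bar>) < e"
proof -
  obtain r :: "nat \<Rightarrow> nat" where r: "strict_mono r" "AE x in M. (\<lambda>m. \<phi> (r m) x - u x) \<longlonglongrightarrow> 0"
    using tendsto_L1_AE_subseq[of M "\<lambda>m x. \<phi> m x - u x"] \<phi> u \<phi>_lim by auto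
  have "(\<lambda>m. integral\<^sup>L M (\<lambda>x. \<bar>cutoff k \<epsilon> (\<phi> (r m) x) - cutoff k \<epsilon> (u x)\<bar> * \<bar>Du j x\<bar>)) \<longlonglongrightarrow> 0"
    for j
  proof (rule integral_bounded_factor_tendsto_0[OF Du])
    show "(\<lambda>x. cutoff k \<epsilon> (\<phi> (r m) x) - cutoff k \<epsilon> (u x)) \<in> borel_measurable M" for m
      unfolding cutoff_def using borel_measurable_integrable[OF \<phi>] borel_measurable_integrable[OF u]
      by measurable
    show "\<bar>cutoff k \<epsilon> (\<phi> (r m) x) - cutoff k \<epsilon> (u x)\<bar> \<le> 1" for m x
      using cutoff_bounds[of k \<epsilon> "\<phi> (r m) x"] cutoff_bounds[of k \<epsilon> "u x"] by (simp add: abs_le_iff)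
    have cont: "isCont (cutoff k \<epsilon>) t" for t
      using continuous_on_cutoff[OF \<open>\<epsilon> > 0\<close>] by (simp add: continuous_on_eq_continuous_at)
    show "AE x in M. (\<lambda>m. cutoff k \<epsilon> (\<phi> (r m) x) - cutoff k \<epsilon> (u x)) \<longlonglongrightarrow> 0"
      using r(2)
    proof eventually_elim
      case (elim x)
      then have "(\<lambda>m. \<phi> (r m) x) \<longlonglongrightarrow> u x"
        by (simp add: LIM_zero_iff)
      then show ?case
        by (intro LIM_zero isCont_tendsto_compose[OF cont])
    qed
  qed
  moreover have "(\<lambda>m. integral\<^sup>L M (\<lambda>x. \<bar>\<phi> (r m) x - u x\<bar>)) \<longlonglongrightarrow> 0"
    "(\<lambda>m. integral\<^sup>L M (\<lambda>x. \<bar>d\<phi> (r m) j x - Du j x\<bar>)) \<longlonglongrightarrow> 0" for j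
    using LIMSEQ_subseq_LIMSEQ[OF \<phi>_lim r(1)] LIMSEQ_subseq_LIMSEQ[OF d\<phi>_lim r(1)]
    by (simp_all add: o_def)
  ultimately have "\<forall>\<^sub>F m in sequentially. integral\<^sup>L M (\<lambda>x. \<bar>\<phi> (r m) x - u x\<bar>) < e
      \<and> (\<forall>j. integral\<^sup>L M (\<lambda>x. \<bar>d\<phi> (r m) j x - Du j x\<bar>) < e)
      \<and> (\<forall>j. integral\<^sup>L M (\<lambda>x. \<bar>cutoff k \<epsilon> (\<phi> (r m) x) - cutoff k \<epsilon> (u x)\<bar> * \<bar>Du j x\<bar>) < e)"
    using \<open>e > 0\<close> by (intro eventually_conj eventually_all_finite order_tendstoD(2)) auto
  then obtain m where "integral\<^sup>L M (\<lambda>x. \<bar>\<phi> (r m) x - u x\<bar>) < e"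
      "\<forall>j. integral\<^sup>L M (\<lambda>x. \<bar>d\<phi> (r m) j x - Du j x\<bar>) < e"
      "\<forall>j. integral\<^sup>L M (\<lambda>x. \<bar>cutoff k \<epsilon> (\<phi> (r m) x) - cutoff k \<epsilon> (u x)\<bar> * \<bar>Du j x\<bar>) < e"
    using eventually_happens'[OF trivial_limit_sequentially] by blast
  then show ?thesis
    by (intro that[of "r m"]) auto
qed

lemma L1_dist_primitive_trunc:
  fixes \<phi> u :: "'a \<Rightarrow> real"
  assumes M: "finite_measure M" and \<phi>: "integrable M \<phi>" and u: "integrable M u"
    and Q\<phi>: "(\<lambda>x. Q (\<phi> x)) \<in> borel_measurable M"
    and Q: "\<And>s. (Q has_real_derivative Q' s) (at s)" "Q 0 = 0" and k: "k > 0" and \<epsilon>: "\<epsilon> > 0"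
    and Q': "\<And>s. \<bar>s\<bar> \<le> B \<Longrightarrow> \<bar>Q' s - cutoff k \<epsilon> s\<bar> \<le> \<delta>" and \<phi>_bound: "\<And>x. \<bar>\<phi> x\<bar> \<le> B"
  shows "integral\<^sup>L M (\<lambda>x. \<bar>Q (\<phi> x) - trunc k (u x)\<bar>)
    \<le> \<delta> * integral\<^sup>L M (\<lambda>x. \<bar>\<phi> x\<bar>) + \<epsilon> * measure M (space M) + integral\<^sup>L M (\<lambda>x. \<bar>\<phi> x - u x\<bar>)"
proof -
  interpret finite_measure M by (rule M)
  have I: "integrable M (\<lambda>x. \<delta> * \<bar>\<phi> x\<bar>)" "integrable M (\<lambda>x. \<bar>\<phi> x - u x\<bar>)"
    using \<phi> u by auto
  have "integral\<^sup>L M (\<lambda>x. \<bar>Q (\<phi> x) - trunc k (u x)\<bar>)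
      \<le> integral\<^sup>L M (\<lambda>x. \<delta> * \<bar>\<phi> x\<bar> + \<epsilon> + \<bar>\<phi> x - u x\<bar>)"
  proof (rule integral_abs_le_pointwise)
    show "integrable M (\<lambda>x. \<delta> * \<bar>\<phi> x\<bar> + \<epsilon> + \<bar>\<phi> x - u x\<bar>)"
      using I by auto
    show "(\<lambda>x. Q (\<phi> x) - trunc k (u x)) \<in> borel_measurable M"
      unfolding trunc_def using Q\<phi> borel_measurable_integrable[OF u] by measurable
    show "\<bar>Q (\<phi> x) - trunc k (u x)\<bar> \<le> \<delta> * \<bar>\<phi> x\<bar> + \<epsilon> + \<bar>\<phi> x - u x\<bar>" for x
      using primitive_close_to_trunc[OF Q k \<epsilon> Q' \<phi>_bound[of x]] trunc_lipschitz[of k "\<phi> x" "u x"]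
      by linarith
  qed
  also have "\<dots> = \<delta> * integral\<^sup>L M (\<lambda>x. \<bar>\<phi> x\<bar>) + \<epsilon> * measure M (space M)
      + integral\<^sup>L M (\<lambda>x. \<bar>\<phi> x - u x\<bar>)"
    using I by (simp add: mult.commute)
  finally show ?thesis .
qed

lemma L1_dist_chain_rule_trunc:
  fixes \<phi> d\<phi> u Du a :: "'a \<Rightarrow> real"
  assumes d\<phi>: "integrable M d\<phi>" and Du: "integrable M Du"
    and \<phi>: "\<phi> \<in> borel_measurable M" and u: "u \<in> borel_measurable M"
    and ad\<phi>: "(\<lambda>x. a x * d\<phi> x) \<in> borel_measurable M"
    and a: "\<And>x. \<bar>a x - cutoff k \<epsilon> (\<phi> x)\<bar> \<le> \<delta>"
  shows "integral\<^sup>L M (\<lambda>x. \<bar>a x * d\<phi> x - (if \<bar>u x\<bar> \<le> k then Du x else 0)\<bar>)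
    \<le> \<delta> * integral\<^sup>L M (\<lambda>x. \<bar>d\<phi> x\<bar>) + integral\<^sup>L M (\<lambda>x. \<bar>d\<phi> x - Du x\<bar>)
      + integral\<^sup>L M (\<lambda>x. \<bar>cutoff k \<epsilon> (\<phi> x) - cutoff k \<epsilon> (u x)\<bar> * \<bar>Du x\<bar>)
      + integral\<^sup>L M (\<lambda>x. \<bar>cutoff k \<epsilon> (u x) - (if \<bar>u x\<bar> \<le> k then 1 else 0)\<bar> * \<bar>Du x\<bar>)"
proof -
  let ?\<chi> = "\<lambda>x. if \<bar>u x\<bar> \<le> k then 1 else 0 :: real"
  let ?c\<phi> = "\<lambda>x. cutoff k \<epsilon> (\<phi> x)" and ?cu = "\<lambda>x. cutoff k \<epsilon> (u x)"
  have c: "\<bar>?c\<phi> x - ?cu x\<bar> \<le> 1" "\<bar>?cu x - ?\<chi> x\<bar> \<le> 1" for x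
    using cutoff_bounds[of k \<epsilon> "\<phi> x"] cutoff_bounds[of k \<epsilon> "u x"] by auto
  have I: "integrable M (\<lambda>x. \<delta> * \<bar>d\<phi> x\<bar>)" "integrable M (\<lambda>x. \<bar>d\<phi> x - Du x\<bar>)"
    "integrable M (\<lambda>x. \<bar>?c\<phi> x - ?cu x\<bar> * \<bar>Du x\<bar>)" "integrable M (\<lambda>x. \<bar>?cu x - ?\<chi> x\<bar> * \<bar>Du x\<bar>)"
    using d\<phi> Du integrable_mult_bounded[OF integrable_abs[OF Du], of "\<lambda>x. \<bar>?c\<phi> x - ?cu x\<bar>" 1]
      integrable_mult_bounded[OF integrable_abs[OF Du], of "\<lambda>x. \<bar>?cu x - ?\<chi> x\<bar>" 1] c \<phi> u
    by (auto simp: mult.commute cutoff_def)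
  have "\<bar>a x * d\<phi> x - ?\<chi> x * Du x\<bar> \<le> \<delta> * \<bar>d\<phi> x\<bar> + \<bar>d\<phi> x - Du x\<bar>
      + \<bar>?c\<phi> x - ?cu x\<bar> * \<bar>Du x\<bar> + \<bar>?cu x - ?\<chi> x\<bar> * \<bar>Du x\<bar>" for x
  proof -
    have "a x * d\<phi> x - ?\<chi> x * Du x = (a x - ?c\<phi> x) * d\<phi> x + ?c\<phi> x * (d\<phi> x - Du x)
        + (?c\<phi> x - ?cu x) * Du x + (?cu x - ?\<chi> x) * Du x"
      by (simp add: algebra_simps)
    moreover have "\<bar>(a x - ?c\<phi> x) * d\<phi> x\<bar> \<le> \<delta> * \<bar>d\<phi> x\<bar>"
      unfolding abs_mult by (rule mult_right_mono[OF a]) simp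
    moreover have "\<bar>?c\<phi> x * (d\<phi> x - Du x)\<bar> \<le> \<bar>d\<phi> x - Du x\<bar>"
      using mult_right_mono[of "\<bar>?c\<phi> x\<bar>" 1 "\<bar>d\<phi> x - Du x\<bar>"] cutoff_bounds[of k \<epsilon> "\<phi> x"]
      by (simp add: abs_mult)
    ultimately show ?thesis
      by (simp add: abs_mult[symmetric]) (smt (verit, best) abs_triangle_ineq)
  qed
  then have "integral\<^sup>L M (\<lambda>x. \<bar>a x * d\<phi> x - ?\<chi> x * Du x\<bar>)
      \<le> integral\<^sup>L M (\<lambda>x. \<delta> * \<bar>d\<phi> x\<bar> + \<bar>d\<phi> x - Du x\<bar>
        + \<bar>?c\<phi> x - ?cu x\<bar> * \<bar>Du x\<bar> + \<bar>?cu x - ?\<chi> x\<bar> * \<bar>Du x\<bar>)"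
    using I ad\<phi> u borel_measurable_integrable[OF Du]
    by (intro integral_abs_le_pointwise) auto
  also have "\<dots> = \<delta> * integral\<^sup>L M (\<lambda>x. \<bar>d\<phi> x\<bar>) + integral\<^sup>L M (\<lambda>x. \<bar>d\<phi> x - Du x\<bar>)
      + integral\<^sup>L M (\<lambda>x. \<bar>?c\<phi> x - ?cu x\<bar> * \<bar>Du x\<bar>) + integral\<^sup>L M (\<lambda>x. \<bar>?cu x - ?\<chi> x\<bar> * \<bar>Du x\<bar>)"
    using I by simp
  finally show ?thesis
    by (simp add: if_distrib[of "\<lambda>c. c * Du _"] cong: if_cong)
qed

lemma set_integral_eq_integral_lebesgue_on:
  fixes f :: "'a::euclidean_space \<Rightarrow> real"
  assumes "\<Omega> \<in> sets lebesgue"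
  shows "(LINT x:\<Omega>|lebesgue. f x) = integral\<^sup>L (lebesgue_on \<Omega>) f"
  unfolding set_lebesgue_integral_def
  by (rule integral_restrict_space[symmetric]) (use assms in simp)

lemma Lp_1_iff_integrable: "Lp \<Omega> 1 u \<longleftrightarrow> integrable (lebesgue_on \<Omega>) u"
  unfolding Lp_def using integrable_abs_iff[of u "lebesgue_on \<Omega>"]
  by (auto dest: borel_measurable_integrable)

lemma W011_integrable:
  assumes "W011 \<Omega> u Du"
  shows "integrable (lebesgue_on \<Omega>) u" "integrable (lebesgue_on \<Omega>) (Du j)"
  using assms by (auto simp: W011_def Lp_1_iff_integrable)

lemma W011_approximating_sequence:
  assumes "\<Omega> \<in> sets lebesgue" "W011 \<Omega> u Du"
  obtains \<phi> where "\<And>m. test_fun \<Omega> (\<phi> m)"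
    "(\<lambda>m. integral\<^sup>L (lebesgue_on \<Omega>) (\<lambda>x. \<bar>\<phi> m x - u x\<bar>)) \<longlonglongrightarrow> 0"
    "\<And>j. (\<lambda>m. integral\<^sup>L (lebesgue_on \<Omega>) (\<lambda>x. \<bar>pder j (\<phi> m) x - Du j x\<bar>)) \<longlonglongrightarrow> 0"
  using assms unfolding W011_def set_integral_eq_integral_lebesgue_on[OF assms(1)] by blast

lemma test_fun_integrable:
  fixes \<phi> :: "real^'n \<Rightarrow> real"
  assumes "\<Omega> \<in> lmeasurable" "test_fun \<Omega> \<phi>"
  shows "integrable (lebesgue_on \<Omega>) \<phi>" "integrable (lebesgue_on \<Omega>) (pder j \<phi>)"
proof -
  interpret finite_measure "lebesgue_on \<Omega>"
    using assms(1) by (rule finite_measure_lebesgue_on)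
  have "g \<in> borel_measurable (lebesgue_on \<Omega>)" if "continuous_on UNIV g" for g :: "real^'n \<Rightarrow> real"
    using assms(1) continuous_on_subset[OF that]
    by (intro continuous_imp_measurable_on_sets_lebesgue) auto
  moreover obtain B B' where "\<And>x. \<bar>\<phi> x\<bar> \<le> B" "\<And>x. \<bar>pder j \<phi> x\<bar> \<le> B'"
    using test_fun_bounded[OF assms(2)] test_fun_pder_bounded[OF assms(2)] by metis
  ultimately show "integrable (lebesgue_on \<Omega>) \<phi>" "integrable (lebesgue_on \<Omega>) (pder j \<phi>)"
    using test_fun_continuous[OF assms(2)] test_fun_pder_continuous[OF assms(2)]
    by (auto intro: integrable_const_bound[where B = B] integrable_const_bound[where B = B'])
qed

lemma integrable_imp_loc_integrable:
  fixes f :: "real^'n \<Rightarrow> real"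
  assumes "\<Omega> \<in> sets lebesgue" "integrable (lebesgue_on \<Omega>) f"
  shows "loc_integrable \<Omega> f"
  unfolding loc_integrable_def
proof (intro allI impI)
  fix K :: "(real^'n) set"
  assume K: "compact K \<and> K \<subseteq> \<Omega>"
  have "integrable lebesgue (\<lambda>x. indicator \<Omega> x *\<^sub>R f x)"
    using assms(2) by (subst (asm) integrable_restrict_space) (use assms(1) in simp_all)
  then have "integrable lebesgue (\<lambda>x. indicator K x *\<^sub>R (indicator \<Omega> x *\<^sub>R f x))"
    by (rule integrable_mult_indicator[rotated])
      (use K in \<open>auto simp: compact_imp_closed borel_closed\<close>)
  moreover have "(\<lambda>x. indicator K x *\<^sub>R (indicator \<Omega> x *\<^sub>R f x)) = (\<lambda>x. indicator K x *\<^sub>R f x)"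
    using K by (auto simp: indicator_def fun_eq_iff)
  ultimately show "set_integrable lebesgue K f"
    unfolding set_integrable_def by simp
qed

lemma integral_mult_bounded_tendsto:
  fixes f :: "nat \<Rightarrow> 'a \<Rightarrow> real"
  assumes "\<And>m. integrable M (f m)" "integrable M g" "h \<in> borel_measurable M" "\<And>x. \<bar>h x\<bar> \<le> B"
    and "(\<lambda>m. integral\<^sup>L M (\<lambda>x. \<bar>f m x - g x\<bar>)) \<longlonglongrightarrow> 0"
  shows "(\<lambda>m. integral\<^sup>L M (\<lambda>x. f m x * h x)) \<longlonglongrightarrow> integral\<^sup>L M (\<lambda>x. g x * h x)"
proof -
  have "\<bar>integral\<^sup>L M (\<lambda>x. f m x * h x) - integral\<^sup>L M (\<lambda>x. g x * h x)\<bar>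
      \<le> B * integral\<^sup>L M (\<lambda>x. \<bar>f m x - g x\<bar>)" for m
  proof -
    have "\<bar>integral\<^sup>L M (\<lambda>x. f m x * h x) - integral\<^sup>L M (\<lambda>x. g x * h x)\<bar>
        = \<bar>integral\<^sup>L M (\<lambda>x. (f m x - g x) * h x)\<bar>"
      using integrable_mult_bounded[OF assms(1) assms(3,4)] integrable_mult_bounded[OF assms(2-4)]
      by (simp add: left_diff_distrib)
    also have "\<dots> \<le> integral\<^sup>L M (\<lambda>x. \<bar>(f m x - g x) * h x\<bar>)"
      by (rule integral_abs_bound)
    also have "\<dots> \<le> integral\<^sup>L M (\<lambda>x. B * \<bar>f m x - g x\<bar>)"
    proof (rule integral_abs_le_pointwise)
      show "integrable M (\<lambda>x. B * \<bar>f m x - g x\<bar>)"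
        using assms(1,2) by auto
      show "(\<lambda>x. (f m x - g x) * h x) \<in> borel_measurable M"
        using assms(1-3) by (auto dest: borel_measurable_integrable)
      show "\<bar>(f m x - g x) * h x\<bar> \<le> B * \<bar>f m x - g x\<bar>" for x
        using mult_left_mono[OF assms(4)[of x], of "\<bar>f m x - g x\<bar>"]
        by (simp add: abs_mult mult.commute)
    qed
    finally show ?thesis
      by simp
  qed
  moreover have "(\<lambda>m. B * integral\<^sup>L M (\<lambda>x. \<bar>f m x - g x\<bar>)) \<longlonglongrightarrow> 0"
    using tendsto_mult_right_zero[OF assms(5)] .
  ultimately show ?thesis
    by (subst LIM_zero_iff[symmetric]) (rule Lim_null_comparison[OF always_eventually]; simp)
qed

lemma weak_pderiv_of_L1_limit:
  fixes v G :: "real^'n \<Rightarrow> real"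
  assumes \<Omega>: "\<Omega> \<in> lmeasurable" and \<psi>: "\<And>m. test_fun \<Omega> (\<psi> m)"
    and v: "integrable (lebesgue_on \<Omega>) v" and G: "integrable (lebesgue_on \<Omega>) G"
    and \<psi>_lim: "(\<lambda>m. integral\<^sup>L (lebesgue_on \<Omega>) (\<lambda>x. \<bar>\<psi> m x - v x\<bar>)) \<longlonglongrightarrow> 0"
    and d\<psi>_lim: "(\<lambda>m. integral\<^sup>L (lebesgue_on \<Omega>) (\<lambda>x. \<bar>pder j (\<psi> m) x - G x\<bar>)) \<longlonglongrightarrow> 0"
  shows "weak_pderiv \<Omega> j v G"
  unfolding weak_pderiv_def
proof (intro conjI allI impI)
  have \<Omega>': "\<Omega> \<in> sets lebesgue"
    using \<Omega> by (rule fmeasurableD)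
  show "loc_integrable \<Omega> v" "loc_integrable \<Omega> G"
    using integrable_imp_loc_integrable[OF \<Omega>'] v G by auto
  fix \<eta>
  assume \<eta>: "test_fun \<Omega> \<eta>"
  obtain B B' where B: "\<And>x. \<bar>\<eta> x\<bar> \<le> B" and B': "\<And>x. \<bar>pder j \<eta> x\<bar> \<le> B'"
    using test_fun_bounded[OF \<eta>] test_fun_pder_bounded[OF \<eta>] by metis
  note I = test_fun_integrable[OF \<Omega>]
  have "(\<lambda>m. integral\<^sup>L (lebesgue_on \<Omega>) (\<lambda>x. \<psi> m x * pder j \<eta> x))
      \<longlonglongrightarrow> integral\<^sup>L (lebesgue_on \<Omega>) (\<lambda>x. v x * pder j \<eta> x)"
    using I[OF \<psi>] v I[OF \<eta>] B' \<psi>_lim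
    by (intro integral_mult_bounded_tendsto) (auto dest: borel_measurable_integrable)
  moreover have "(\<lambda>m. integral\<^sup>L (lebesgue_on \<Omega>) (\<lambda>x. \<psi> m x * pder j \<eta> x))
      \<longlonglongrightarrow> - integral\<^sup>L (lebesgue_on \<Omega>) (\<lambda>x. G x * \<eta> x)"
  proof -
    have "(\<lambda>m. integral\<^sup>L (lebesgue_on \<Omega>) (\<lambda>x. pder j (\<psi> m) x * \<eta> x))
        \<longlonglongrightarrow> integral\<^sup>L (lebesgue_on \<Omega>) (\<lambda>x. G x * \<eta> x)"
      using I[OF \<psi>] G I[OF \<eta>] B d\<psi>_lim
      by (intro integral_mult_bounded_tendsto) (auto dest: borel_measurable_integrable)
    then show ?thesis
      unfolding test_fun_integration_by_parts[OF \<Omega>' \<psi> \<eta>] by (rule tendsto_minus)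
  qed
  ultimately show "(LINT x:\<Omega>|lebesgue. v x * pder j \<eta> x) = - (LINT x:\<Omega>|lebesgue. G x * \<eta> x)"
    unfolding set_integral_eq_integral_lebesgue_on[OF \<Omega>'] by (rule LIMSEQ_unique)
qed

lemma W011_of_test_fun_approx:
  fixes v :: "real^'n \<Rightarrow> real"
  assumes \<Omega>: "\<Omega> \<in> lmeasurable"
    and v: "integrable (lebesgue_on \<Omega>) v" and G: "\<And>j. integrable (lebesgue_on \<Omega>) (G j)"
    and approx: "\<And>e. e > 0 \<Longrightarrow> \<exists>\<psi>. test_fun \<Omega> \<psi>
      \<and> integral\<^sup>L (lebesgue_on \<Omega>) (\<lambda>x. \<bar>\<psi> x - v x\<bar>) < e
      \<and> (\<forall>j. integral\<^sup>L (lebesgue_on \<Omega>) (\<lambda>x. \<bar>pder j \<psi> x - G j x\<bar>) < e)"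
  shows "W011 \<Omega> v G"
proof -
  let ?M = "lebesgue_on \<Omega>"
  have "\<forall>m. \<exists>\<psi>. test_fun \<Omega> \<psi> \<and> integral\<^sup>L ?M (\<lambda>x. \<bar>\<psi> x - v x\<bar>) < inverse (real (Suc m))
      \<and> (\<forall>j. integral\<^sup>L ?M (\<lambda>x. \<bar>pder j \<psi> x - G j x\<bar>) < inverse (real (Suc m)))"
    using approx by simp
  then obtain \<psi> where "\<forall>m. test_fun \<Omega> (\<psi> m)
      \<and> integral\<^sup>L ?M (\<lambda>x. \<bar>\<psi> m x - v x\<bar>) < inverse (real (Suc m))
      \<and> (\<forall>j. integral\<^sup>L ?M (\<lambda>x. \<bar>pder j (\<psi> m) x - G j x\<bar>) < inverse (real (Suc m)))"
    by (auto dest: choice)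
  then have \<psi>: "\<And>m. test_fun \<Omega> (\<psi> m)"
    and \<psi>_close: "\<And>m. integral\<^sup>L ?M (\<lambda>x. \<bar>\<psi> m x - v x\<bar>) < inverse (real (Suc m))"
    and d\<psi>_close: "\<And>m j. integral\<^sup>L ?M (\<lambda>x. \<bar>pder j (\<psi> m) x - G j x\<bar>) < inverse (real (Suc m))"
    by auto
  have lim: "(\<lambda>m. integral\<^sup>L ?M (F m)) \<longlonglongrightarrow> 0"
    if "\<And>m. integral\<^sup>L ?M (F m) < inverse (real (Suc m))" "\<And>m x. F m x \<ge> 0" for F
    using that
    by (intro tendsto_sandwich[OF _ _ tendsto_const LIMSEQ_inverse_real_of_nat] always_eventually)
      (auto intro: integral_nonneg_AE less_imp_le)
  have \<psi>_lim: "(\<lambda>m. integral\<^sup>L ?M (\<lambda>x. \<bar>\<psi> m x - v x\<bar>)) \<longlonglongrightarrow> 0"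
    and d\<psi>_lim: "(\<lambda>m. integral\<^sup>L ?M (\<lambda>x. \<bar>pder j (\<psi> m) x - G j x\<bar>)) \<longlonglongrightarrow> 0" for j
    using lim \<psi>_close d\<psi>_close by auto
  have \<Omega>': "\<Omega> \<in> sets lebesgue"
    using \<Omega> by (rule fmeasurableD)
  show ?thesis
    unfolding W011_def Lp_1_iff_integrable set_integral_eq_integral_lebesgue_on[OF \<Omega>']
    using v G \<psi> \<psi>_lim d\<psi>_lim weak_pderiv_of_L1_limit[OF \<Omega> \<psi> v G \<psi>_lim d\<psi>_lim] by blast
qed

lemma small_multiplier:
  fixes c :: "'j::finite \<Rightarrow> real"
  assumes "e > 0" "0 \<le> a" "\<And>j. 0 \<le> c j"
  obtains \<delta> where "\<delta> > 0" "\<delta> * a < e" "\<And>j. \<delta> * c j < e"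
proof -
  define S where "S = 1 + a + (\<Sum>j\<in>UNIV. c j)"
  have c_le: "c j \<le> (\<Sum>j\<in>UNIV. c j)" for j
    by (rule member_le_sum) (simp_all add: assms(3))
  have "0 \<le> (\<Sum>j\<in>UNIV. c j)"
    by (rule sum_nonneg) (rule assms(3))
  then have S: "a < S" "c j < S" for j
    unfolding S_def using assms(2) c_le[of j] by linarith+
  have small: "e / S * x < e" if "0 \<le> x" "x < S" for x
    using that assms(1) by (simp add: field_simps)
  show ?thesis
    using assms S small by (intro that[of "e / S"]) auto
qed

text \<open>If \<open>\<phi>\<close> is a test function close to \<open>u\<close>, then so is \<open>Q \<circ> \<phi>\<close> to
  \<open>trunc k \<circ> u\<close>, for a polynomial \<open>Q\<close> whose derivative is uniformly close to
  \<open>cutoff k \<epsilon>\<close> on the range of \<open>\<phi>\<close>; the gradient \<open>Q'(\<phi>) D\<phi>\<close> is then close to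
  \<open>Du\<close> on \<open>{|u| \<le> k}\<close> and to \<open>0\<close> elsewhere.\<close>

lemma trunc_approx_by_poly_comp:
  fixes \<phi> u :: "real^'n \<Rightarrow> real" and Du :: "'n \<Rightarrow> real^'n \<Rightarrow> real"
  assumes \<Omega>: "\<Omega> \<in> lmeasurable" and \<phi>: "test_fun \<Omega> \<phi>"
    and u: "integrable (lebesgue_on \<Omega>) u" and Du: "\<And>j. integrable (lebesgue_on \<Omega>) (Du j)"
    and k: "k > 0" and \<epsilon>: "\<epsilon> > 0" and e: "e > 0"
    and \<epsilon>_small: "\<epsilon> * measure (lebesgue_on \<Omega>) (space (lebesgue_on \<Omega>)) < e"
    and \<phi>_u: "integral\<^sup>L (lebesgue_on \<Omega>) (\<lambda>x. \<bar>\<phi> x - u x\<bar>) < e"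
    and d\<phi>_Du: "\<And>j. integral\<^sup>L (lebesgue_on \<Omega>) (\<lambda>x. \<bar>pder j \<phi> x - Du j x\<bar>) < e"
    and cutoff_\<phi>: "\<And>j. integral\<^sup>L (lebesgue_on \<Omega>)
      (\<lambda>x. \<bar>cutoff k \<epsilon> (\<phi> x) - cutoff k \<epsilon> (u x)\<bar> * \<bar>Du j x\<bar>) < e"
    and cutoff_u: "\<And>j. integral\<^sup>L (lebesgue_on \<Omega>)
      (\<lambda>x. \<bar>cutoff k \<epsilon> (u x) - (if \<bar>u x\<bar> \<le> k then 1 else 0)\<bar> * \<bar>Du j x\<bar>) < e"
  obtains \<psi> where "test_fun \<Omega> \<psi>"
    "integral\<^sup>L (lebesgue_on \<Omega>) (\<lambda>x. \<bar>\<psi> x - trunc k (u x)\<bar>) < 3 * e"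
    "\<And>j. integral\<^sup>L (lebesgue_on \<Omega>) (\<lambda>x. \<bar>pder j \<psi> x - (if \<bar>u x\<bar> \<le> k then Du j x else 0)\<bar>) < 4 * e"
proof -
  let ?M = "lebesgue_on \<Omega>"
  note I = test_fun_integrable[OF \<Omega>]
  obtain B where B: "\<And>x. \<bar>\<phi> x\<bar> \<le> B"
    using test_fun_bounded[OF \<phi>] by blast
  obtain \<delta> where \<delta>: "\<delta> > 0" "\<delta> * integral\<^sup>L ?M (\<lambda>x. \<bar>\<phi> x\<bar>) < e"
    "\<And>j. \<delta> * integral\<^sup>L ?M (\<lambda>x. \<bar>pder j \<phi> x\<bar>) < e"
    using small_multiplier[OF e, of "integral\<^sup>L ?M (\<lambda>x. \<bar>\<phi> x\<bar>)"
        "\<lambda>j. integral\<^sup>L ?M (\<lambda>x. \<bar>pder j \<phi> x\<bar>)"]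
    by (auto simp: integral_nonneg_AE)
  obtain c N where cN: "\<And>s. \<bar>s\<bar> \<le> B \<Longrightarrow> \<bar>poly0_deriv c N s - cutoff k \<epsilon> s\<bar> \<le> \<delta>"
    using poly0_deriv_uniform_approx[OF continuous_on_subset[OF continuous_on_cutoff[OF \<epsilon>]] \<delta>(1)]
    by blast
  define \<psi> where "\<psi> x = poly0 c N (\<phi> x)" for x
  have \<psi>: "test_fun \<Omega> \<psi>"
    unfolding \<psi>_def[abs_def] using \<phi> by (rule test_fun_poly0)
  have "integral\<^sup>L ?M (\<lambda>x. \<bar>\<psi> x - trunc k (u x)\<bar>)
      \<le> \<delta> * integral\<^sup>L ?M (\<lambda>x. \<bar>\<phi> x\<bar>) + \<epsilon> * measure ?M (space ?M) + integral\<^sup>L ?M (\<lambda>x. \<bar>\<phi> x - u x\<bar>)"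
    unfolding \<psi>_def
  proof (rule L1_dist_primitive_trunc[OF finite_measure_lebesgue_on[OF \<Omega>] I(1)[OF \<phi>] u _
        poly0_has_real_derivative poly0_0 k \<epsilon> cN B])
    show "(\<lambda>x. poly0 c N (\<phi> x)) \<in> borel_measurable ?M"
      using borel_measurable_integrable[OF I(1)[OF \<psi>]] by (simp add: \<psi>_def[abs_def])
  qed
  also have "\<dots> < 3 * e"
    using \<delta>(2) \<epsilon>_small \<phi>_u by simp
  finally have "integral\<^sup>L ?M (\<lambda>x. \<bar>\<psi> x - trunc k (u x)\<bar>) < 3 * e" .
  moreover have "integral\<^sup>L ?M (\<lambda>x. \<bar>pder j \<psi> x - (if \<bar>u x\<bar> \<le> k then Du j x else 0)\<bar>) < 4 * e" for j
  proof -
    have d\<psi>: "pder j \<psi> = (\<lambda>x. poly0_deriv c N (\<phi> x) * pder j \<phi> x)"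
      unfolding \<psi>_def[abs_def] by (rule ext) (rule pder_poly0_comp[OF \<phi>])
    have "integral\<^sup>L ?M
        (\<lambda>x. \<bar>poly0_deriv c N (\<phi> x) * pder j \<phi> x - (if \<bar>u x\<bar> \<le> k then Du j x else 0)\<bar>)
      \<le> \<delta> * integral\<^sup>L ?M (\<lambda>x. \<bar>pder j \<phi> x\<bar>) + integral\<^sup>L ?M (\<lambda>x. \<bar>pder j \<phi> x - Du j x\<bar>)
        + integral\<^sup>L ?M (\<lambda>x. \<bar>cutoff k \<epsilon> (\<phi> x) - cutoff k \<epsilon> (u x)\<bar> * \<bar>Du j x\<bar>)
        + integral\<^sup>L ?M (\<lambda>x. \<bar>cutoff k \<epsilon> (u x) - (if \<bar>u x\<bar> \<le> k then 1 else 0)\<bar> * \<bar>Du j x\<bar>)"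
    proof (rule L1_dist_chain_rule_trunc[OF I(2)[OF \<phi>] Du borel_measurable_integrable[OF I(1)[OF \<phi>]]
          borel_measurable_integrable[OF u]])
      show "(\<lambda>x. poly0_deriv c N (\<phi> x) * pder j \<phi> x) \<in> borel_measurable ?M"
        unfolding d\<psi>[symmetric] by (rule borel_measurable_integrable[OF I(2)[OF \<psi>]])
      show "\<bar>poly0_deriv c N (\<phi> x) - cutoff k \<epsilon> (\<phi> x)\<bar> \<le> \<delta>" for x
        using cN[OF B] .
    qed
    also have "\<dots> < 4 * e"
      using \<delta>(3)[of j] d\<phi>_Du[of j] cutoff_\<phi>[of j] cutoff_u[of j] by linarith
    finally show ?thesis
      by (simp add: d\<psi>)
  qed
  ultimately show ?thesis
    using \<psi> by (intro that) auto
qed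

lemma trunc_test_fun_approx:
  fixes u :: "real^'n \<Rightarrow> real" and Du :: "'n \<Rightarrow> real^'n \<Rightarrow> real"
  assumes \<Omega>: "\<Omega> \<in> lmeasurable" and W: "W011 \<Omega> u Du" and k: "k > 0" and e: "e > 0"
  obtains \<psi> where "test_fun \<Omega> \<psi>"
    "integral\<^sup>L (lebesgue_on \<Omega>) (\<lambda>x. \<bar>\<psi> x - trunc k (u x)\<bar>) < e"
    "\<And>j. integral\<^sup>L (lebesgue_on \<Omega>) (\<lambda>x. \<bar>pder j \<psi> x - (if \<bar>u x\<bar> \<le> k then Du j x else 0)\<bar>) < e"
proof -
  let ?M = "lebesgue_on \<Omega>"
  have u: "integrable ?M u" and Du: "\<And>j. integrable ?M (Du j)"
    using W011_integrable[OF W] by auto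
  obtain \<phi> where \<phi>: "\<And>m. test_fun \<Omega> (\<phi> m)"
    "(\<lambda>m. integral\<^sup>L ?M (\<lambda>x. \<bar>\<phi> m x - u x\<bar>)) \<longlonglongrightarrow> 0"
    "\<And>j. (\<lambda>m. integral\<^sup>L ?M (\<lambda>x. \<bar>pder j (\<phi> m) x - Du j x\<bar>)) \<longlonglongrightarrow> 0"
    using W011_approximating_sequence[OF fmeasurableD[OF \<Omega>] W] by blast
  have e4: "e / 4 > 0"
    using e by simp
  obtain \<epsilon> where \<epsilon>: "\<epsilon> > 0" "\<epsilon> * measure ?M (space ?M) < e / 4"
    "\<And>j. integral\<^sup>L ?M (\<lambda>x. \<bar>cutoff k \<epsilon> (u x) - (if \<bar>u x\<bar> \<le> k then 1 else 0)\<bar> * \<bar>Du j x\<bar>) < e / 4"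
    by (rule cutoff_L1_approx_indicator[where Du = Du, OF finite_measure_lebesgue_on[OF \<Omega>] k e4
          borel_measurable_integrable[OF u] Du]) blast
  obtain m where m: "integral\<^sup>L ?M (\<lambda>x. \<bar>\<phi> m x - u x\<bar>) < e / 4"
    "\<And>j. integral\<^sup>L ?M (\<lambda>x. \<bar>pder j (\<phi> m) x - Du j x\<bar>) < e / 4"
    "\<And>j. integral\<^sup>L ?M (\<lambda>x. \<bar>cutoff k \<epsilon> (\<phi> m x) - cutoff k \<epsilon> (u x)\<bar> * \<bar>Du j x\<bar>) < e / 4"
    by (rule L1_approx_with_cutoff[where Du = Du and k = k,
          OF test_fun_integrable(1)[OF \<Omega> \<phi>(1)] u Du \<phi>(2,3) \<epsilon>(1) e4]) blast
  obtain \<psi> where "test_fun \<Omega> \<psi>" "integral\<^sup>L ?M (\<lambda>x. \<bar>\<psi> x - trunc k (u x)\<bar>) < 3 * (e / 4)"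
    "\<And>j. integral\<^sup>L ?M (\<lambda>x. \<bar>pder j \<psi> x - (if \<bar>u x\<bar> \<le> k then Du j x else 0)\<bar>) < 4 * (e / 4)"
    by (rule trunc_approx_by_poly_comp[where Du = Du, OF \<Omega> \<phi>(1) u Du k \<epsilon>(1) e4 \<epsilon>(2) m \<epsilon>(3)])
      blast
  then show ?thesis
    using e by (intro that) auto
qed

lemma trunc_W01p:
  fixes u :: "real^'n \<Rightarrow> real" and Du :: "'n \<Rightarrow> real^'n \<Rightarrow> real"
  assumes \<Omega>: "\<Omega> \<in> lmeasurable" and W: "W01p \<Omega> p u Du" and k: "k > 0"
  shows "W01p \<Omega> p (\<lambda>x. trunc k (u x)) (\<lambda>j x. if \<bar>u x\<bar> \<le> k then Du j x else 0)"
proof -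
  let ?M = "lebesgue_on \<Omega>"
  let ?G = "\<lambda>j x. if \<bar>u x\<bar> \<le> k then Du j x else 0"
  have W1: "W011 \<Omega> u Du"
    using W by (simp add: W01p_def)
  have u: "integrable ?M u" and Du: "\<And>j. integrable ?M (Du j)"
    using W011_integrable[OF W1] by auto
  have G: "?G j \<in> borel_measurable ?M" for j
    using borel_measurable_integrable[OF u] borel_measurable_integrable[OF Du] by measurable
  have "integrable ?M (\<lambda>x. trunc k (u x))"
  proof (rule Bochner_Integration.integrable_bound[OF integrable_abs[OF u]])
    show "(\<lambda>x. trunc k (u x)) \<in> borel_measurable ?M"
      unfolding trunc_def using borel_measurable_integrable[OF u] by measurable
    show "AE x in ?M. norm (trunc k (u x)) \<le> norm \<bar>u x\<bar>"
      using abs_trunc_le(1)[OF k] by simp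
  qed
  moreover have "integrable ?M (?G j)" for j
    by (rule Bochner_Integration.integrable_bound[OF Du[of j] G[of j]]) simp
  ultimately have "W011 \<Omega> (\<lambda>x. trunc k (u x)) ?G"
  proof (rule W011_of_test_fun_approx[OF \<Omega>])
    fix e :: real
    assume "e > 0"
    then obtain \<psi> where "test_fun \<Omega> \<psi>" "integral\<^sup>L ?M (\<lambda>x. \<bar>\<psi> x - trunc k (u x)\<bar>) < e"
      "\<And>j. integral\<^sup>L ?M (\<lambda>x. \<bar>pder j \<psi> x - ?G j x\<bar>) < e"
      by (rule trunc_test_fun_approx[OF \<Omega> W1 k]) blast
    then show "\<exists>\<psi>. test_fun \<Omega> \<psi> \<and> integral\<^sup>L ?M (\<lambda>x. \<bar>\<psi> x - trunc k (u x)\<bar>) < e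
        \<and> (\<forall>j. integral\<^sup>L ?M (\<lambda>x. \<bar>pder j \<psi> x - ?G j x\<bar>) < e)"
      by blast
  qed
  moreover have "Lp \<Omega> (p j) (?G j)" for j
  proof -
    have "integrable ?M (\<lambda>x. \<bar>Du j x\<bar> powr p j)"
      using W by (simp add: W01p_def Lp_def)
    then have "integrable ?M (\<lambda>x. \<bar>?G j x\<bar> powr p j)"
      by (rule Bochner_Integration.integrable_bound) (use G[of j] in \<open>auto intro: AE_I2\<close>)
    then show ?thesis
      using G[of j] by (simp add: Lp_def)
  qed
  ultimately show ?thesis
    by (simp add: W01p_def)
qed

section \<open>Testing the equation with truncations\<close>

definition solves_weakly ::
  "(real^'n::finite) set \<Rightarrow> ('n \<Rightarrow> real) \<Rightarrow> (real^'n \<Rightarrow> real) \<Rightarrow> ('n \<Rightarrow> real^'n \<Rightarrow> real)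
    \<Rightarrow> (real^'n \<Rightarrow> real) \<Rightarrow> ('n \<Rightarrow> real^'n \<Rightarrow> real) \<Rightarrow> bool" where
  "solves_weakly \<Omega> p A B g D \<longleftrightarrow> (\<forall>\<phi> D\<phi>. W01p \<Omega> p \<phi> D\<phi> \<longrightarrow> Linf \<Omega> \<phi> \<longrightarrow>
     (\<forall>j. integrable (lebesgue_on \<Omega>) (\<lambda>x. A x * \<bar>D j x\<bar> powr (p j - 2) * D j x * D\<phi> j x)) \<and>
     (\<forall>j. integrable (lebesgue_on \<Omega>) (\<lambda>x. B j x * \<phi> x)) \<and>
     (\<Sum>j\<in>UNIV. LINT x:\<Omega>|lebesgue. A x * \<bar>D j x\<bar> powr (p j - 2) * D j x * D\<phi> j x)
       + (\<Sum>j\<in>UNIV. LINT x:\<Omega>|lebesgue. B j x * \<phi> x)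
     = (LINT x:\<Omega>|lebesgue. g x * \<phi> x))"

lemma W01p_integrable:
  assumes "W01p \<Omega> p u Du"
  shows "integrable (lebesgue_on \<Omega>) u" "integrable (lebesgue_on \<Omega>) (Du j)"
  using assms W011_integrable by (auto simp: W01p_def)

lemma W01p_trunc_measurable:
  assumes "W01p \<Omega> p u Du"
  shows "(\<lambda>x. trunc k (u x)) \<in> borel_measurable (lebesgue_on \<Omega>)"
  unfolding trunc_def using borel_measurable_integrable[OF W01p_integrable(1)[OF assms]]
  by measurable

lemma integrable_trunc:
  assumes "integrable M f" "k > 0"
  shows "integrable M (\<lambda>x. trunc k (f x))"
proof (rule Bochner_Integration.integrable_bound[OF assms(1)])
  show "(\<lambda>x. trunc k (f x)) \<in> borel_measurable M"
    unfolding trunc_def using borel_measurable_integrable[OF assms(1)] by measurable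
  show "AE x in M. norm (trunc k (f x)) \<le> norm (f x)"
    using abs_trunc_le(1)[OF assms(2)] by simp
qed

lemma abs_powr_minus_2_mult_self:
  fixes d p :: real
  assumes "p \<ge> 2"
  shows "\<bar>d\<bar> powr (p - 2) * d * d = \<bar>d\<bar> powr p"
proof (cases "d = 0")
  case False
  have dd: "d * d = \<bar>d\<bar> powr 2"
    using False by (simp add: powr_numeral power2_eq_square abs_mult_self_eq)
  have "\<bar>d\<bar> powr (p - 2) * d * d = \<bar>d\<bar> powr (p - 2) * \<bar>d\<bar> powr 2"
    unfolding mult.assoc dd ..
  also have "\<dots> = \<bar>d\<bar> powr ((p - 2) + 2)"
    by (rule powr_add[symmetric])
  finally show ?thesis
    by simp
qed simp

lemma trunc_energy_inequality:
  fixes U :: "real^'n \<Rightarrow> real" and D :: "'n \<Rightarrow> real^'n \<Rightarrow> real" and s :: real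
  defines "T \<equiv> \<lambda>x. trunc s (U x)" and "G \<equiv> \<lambda>j x. if \<bar>U x\<bar> \<le> s then D j x else 0"
  assumes \<Omega>: "\<Omega> \<in> lmeasurable" and U: "W01p \<Omega> p U D" and p: "\<And>j. p j \<ge> 2"
    and eq: "solves_weakly \<Omega> p A B g D" and s: "s > 0"
    and g: "integrable (lebesgue_on \<Omega>) g" and f: "integrable (lebesgue_on \<Omega>) f"
    and g_le_f: "AE x in lebesgue_on \<Omega>. g x \<le> f x" and U_nonneg: "AE x in lebesgue_on \<Omega>. 0 \<le> U x"
  shows "(\<forall>j. integrable (lebesgue_on \<Omega>) (\<lambda>x. A x * \<bar>G j x\<bar> powr p j))
    \<and> (\<forall>j. integrable (lebesgue_on \<Omega>) (\<lambda>x. B j x * T x))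
    \<and> (\<Sum>j\<in>UNIV. integral\<^sup>L (lebesgue_on \<Omega>) (\<lambda>x. A x * \<bar>G j x\<bar> powr p j))
      + (\<Sum>j\<in>UNIV. integral\<^sup>L (lebesgue_on \<Omega>) (\<lambda>x. B j x * T x))
      \<le> integral\<^sup>L (lebesgue_on \<Omega>) (\<lambda>x. f x * T x)"
proof -
  let ?M = "lebesgue_on \<Omega>"
  have \<Omega>': "\<Omega> \<in> sets lebesgue"
    using \<Omega> by (rule fmeasurableD)
  have T_meas: "T \<in> borel_measurable ?M"
    unfolding T_def using U by (rule W01p_trunc_measurable)
  have T_bound: "\<bar>T x\<bar> \<le> s" for x
    unfolding T_def using abs_trunc_le(2)[OF s] .
  have "W01p \<Omega> p T G"
    unfolding T_def G_def using trunc_W01p[OF \<Omega> U s] .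
  moreover have "Linf \<Omega> T"
    unfolding Linf_def using T_meas T_bound by auto
  ultimately have E: "(\<forall>j. integrable ?M (\<lambda>x. A x * \<bar>D j x\<bar> powr (p j - 2) * D j x * G j x))
      \<and> (\<forall>j. integrable ?M (\<lambda>x. B j x * T x))
      \<and> (\<Sum>j\<in>UNIV. integral\<^sup>L ?M (\<lambda>x. A x * \<bar>D j x\<bar> powr (p j - 2) * D j x * G j x))
        + (\<Sum>j\<in>UNIV. integral\<^sup>L ?M (\<lambda>x. B j x * T x)) = integral\<^sup>L ?M (\<lambda>x. g x * T x)"
    using eq unfolding solves_weakly_def set_integral_eq_integral_lebesgue_on[OF \<Omega>'] by blast
  have "(\<lambda>x. A x * \<bar>D j x\<bar> powr (p j - 2) * D j x * G j x) = (\<lambda>x. A x * \<bar>G j x\<bar> powr p j)" for j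
    using abs_powr_minus_2_mult_self[OF p, of "D j _" j] by (simp add: G_def mult.assoc fun_eq_iff)
  then have E': "(\<forall>j. integrable ?M (\<lambda>x. A x * \<bar>G j x\<bar> powr p j))
      \<and> (\<Sum>j\<in>UNIV. integral\<^sup>L ?M (\<lambda>x. A x * \<bar>G j x\<bar> powr p j))
        + (\<Sum>j\<in>UNIV. integral\<^sup>L ?M (\<lambda>x. B j x * T x)) = integral\<^sup>L ?M (\<lambda>x. g x * T x)"
    using E by simp
  have "integral\<^sup>L ?M (\<lambda>x. g x * T x) \<le> integral\<^sup>L ?M (\<lambda>x. f x * T x)"
  proof (rule integral_mono_AE)
    show "integrable ?M (\<lambda>x. g x * T x)" "integrable ?M (\<lambda>x. f x * T x)"
      using g f T_meas T_bound by (auto intro: integrable_mult_bounded)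
    show "AE x in ?M. g x * T x \<le> f x * T x"
      using g_le_f U_nonneg
      by eventually_elim (simp add: T_def mult_right_mono trunc_bounds_of_nonneg[OF s])
  qed
  then show ?thesis
    using E E' by simp
qed

lemma sum_nn_integral_le_of_integral_le:
  fixes F :: "'j \<Rightarrow> 'a \<Rightarrow> real" and H :: "'a \<Rightarrow> real"
  assumes le: "(\<Sum>j\<in>I. integral\<^sup>L M (F j)) \<le> integral\<^sup>L M H"
    and F: "\<And>j. j \<in> I \<Longrightarrow> integrable M (F j)" "\<And>j. j \<in> I \<Longrightarrow> AE x in M. 0 \<le> F j x"
    and H: "integrable M H" "AE x in M. 0 \<le> H x"
  shows "(\<Sum>j\<in>I. \<integral>\<^sup>+ x. ennreal (F j x) \<partial>M) \<le> (\<integral>\<^sup>+ x. ennreal (H x) \<partial>M)"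
proof -
  have "(\<Sum>j\<in>I. \<integral>\<^sup>+ x. ennreal (F j x) \<partial>M) = (\<Sum>j\<in>I. ennreal (integral\<^sup>L M (F j)))"
    using F by (intro sum.cong refl nn_integral_eq_integral)
  also have "\<dots> = ennreal (\<Sum>j\<in>I. integral\<^sup>L M (F j))"
    using F by (intro sum_ennreal integral_nonneg_AE) auto
  also have "\<dots> \<le> ennreal (integral\<^sup>L M H)"
    using le by (rule ennreal_leI)
  also have "\<dots> = (\<integral>\<^sup>+ x. ennreal (H x) \<partial>M)"
    using H by (rule nn_integral_eq_integral[symmetric])
  finally show ?thesis .
qed

lemma trunc_gradient_estimate:
  fixes U :: "real^'n \<Rightarrow> real" and D :: "'n \<Rightarrow> real^'n \<Rightarrow> real"
  assumes \<Omega>: "\<Omega> \<in> lmeasurable" and U: "W01p \<Omega> p U D" and p: "\<And>j. p j \<ge> 2"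
    and eq: "solves_weakly \<Omega> p A B g D" and k: "k > 0"
    and g: "integrable (lebesgue_on \<Omega>) g" and f: "integrable (lebesgue_on \<Omega>) f"
    and g_le_f: "AE x in lebesgue_on \<Omega>. g x \<le> f x" and U_nonneg: "AE x in lebesgue_on \<Omega>. 0 \<le> U x"
    and f_nonneg: "AE x in lebesgue_on \<Omega>. 0 \<le> f x"
    and A_nonneg: "AE x in lebesgue_on \<Omega>. 0 \<le> A x"
    and B_nonneg: "\<And>j. AE x in lebesgue_on \<Omega>. 0 \<le> B j x"
  shows "\<exists>G. (\<forall>j. weak_pderiv \<Omega> j (\<lambda>x. trunc k (U x)) (G j)) \<and>
    ennreal (1 / k) * (\<Sum>j\<in>UNIV. \<integral>\<^sup>+ x. ennreal (A x * \<bar>G j x\<bar> powr p j) \<partial>lebesgue_on \<Omega>)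
      \<le> (\<integral>\<^sup>+ x. ennreal (f x * trunc k (U x) / k) \<partial>lebesgue_on \<Omega>)"
proof (intro exI conjI)
  let ?M = "lebesgue_on \<Omega>"
  let ?G = "\<lambda>j x. if \<bar>U x\<bar> \<le> k then D j x else 0"
  show "\<forall>j. weak_pderiv \<Omega> j (\<lambda>x. trunc k (U x)) (?G j)"
    using trunc_W01p[OF \<Omega> U k] by (simp add: W01p_def W011_def)
  note E = trunc_energy_inequality[OF \<Omega> U p eq k g f g_le_f U_nonneg]
  have "AE x in ?M. 0 \<le> B j x * trunc k (U x)" for j
    using B_nonneg[of j] U_nonneg by eventually_elim (simp add: trunc_bounds_of_nonneg[OF k])
  then have "0 \<le> (\<Sum>j\<in>UNIV. integral\<^sup>L ?M (\<lambda>x. B j x * trunc k (U x)))"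
    by (intro sum_nonneg integral_nonneg_AE)
  then have "(\<Sum>j\<in>UNIV. integral\<^sup>L ?M (\<lambda>x. A x * \<bar>?G j x\<bar> powr p j / k))
      \<le> integral\<^sup>L ?M (\<lambda>x. f x * trunc k (U x) / k)"
    using E k by (simp add: sum_divide_distrib[symmetric] divide_right_mono)
  then have "(\<Sum>j\<in>UNIV. \<integral>\<^sup>+ x. ennreal (A x * \<bar>?G j x\<bar> powr p j / k) \<partial>?M)
      \<le> (\<integral>\<^sup>+ x. ennreal (f x * trunc k (U x) / k) \<partial>?M)"
  proof (rule sum_nn_integral_le_of_integral_le)
    show "integrable ?M (\<lambda>x. A x * \<bar>?G j x\<bar> powr p j / k)" for j
      using E by simp
    show "integrable ?M (\<lambda>x. f x * trunc k (U x) / k)"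
      using integrable_mult_bounded[OF f W01p_trunc_measurable[OF U] abs_trunc_le(2)[OF k]] by simp
    show "AE x in ?M. 0 \<le> A x * \<bar>?G j x\<bar> powr p j / k" for j
      using A_nonneg by eventually_elim (use k in simp)
    show "AE x in ?M. 0 \<le> f x * trunc k (U x) / k"
      using f_nonneg U_nonneg by eventually_elim (use k in \<open>simp add: trunc_bounds_of_nonneg\<close>)
  qed
  moreover have
    "ennreal (A x * \<bar>?G j x\<bar> powr p j / k) = ennreal (1 / k) * ennreal (A x * \<bar>?G j x\<bar> powr p j)"
    for j x
    using k by (simp add: ennreal_mult'[symmetric])
  moreover have "(\<lambda>x. A x * \<bar>?G j x\<bar> powr p j) \<in> borel_measurable ?M" for j
    using E by (blast intro: borel_measurable_integrable)
  ultimately show "ennreal (1 / k) * (\<Sum>j\<in>UNIV. \<integral>\<^sup>+ x. ennreal (A x * \<bar>?G j x\<bar> powr p j) \<partial>?M)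
      \<le> (\<integral>\<^sup>+ x. ennreal (f x * trunc k (U x) / k) \<partial>?M)"
    by (simp add: sum_distrib_left nn_integral_cmult)
qed

lemma trunc_div_eq_min: "s > 0 \<Longrightarrow> t \<ge> 0 \<Longrightarrow> trunc s t / s = min (t / s) 1"
  by (auto simp: trunc_def min_def field_simps)

lemma trunc_div_nonpos: "s > 0 \<Longrightarrow> t \<le> 0 \<Longrightarrow> trunc s t / s \<le> 0"
  by (simp add: trunc_def divide_nonpos_pos)

lemma incseq_ennreal_trunc_div:
  "incseq (\<lambda>i. ennreal (trunc (inverse (real (Suc i))) t / inverse (real (Suc i))))"
proof (rule incseq_SucI)
  fix i
  show "ennreal (trunc (inverse (real (Suc i))) t / inverse (real (Suc i)))
      \<le> ennreal (trunc (inverse (real (Suc (Suc i)))) t / inverse (real (Suc (Suc i))))"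
  proof (cases "t \<ge> 0")
    case True
    then have "t * real (Suc i) \<le> t * real (Suc (Suc i))"
      by (intro mult_left_mono) auto
    then have "t / inverse (real (Suc i)) \<le> t / inverse (real (Suc (Suc i)))"
      by (simp add: divide_inverse del: of_nat_Suc)
    then show ?thesis
      using True by (intro ennreal_leI) (simp add: trunc_div_eq_min del: of_nat_Suc)
  next
    case False
    then show ?thesis
      using trunc_div_nonpos[of "inverse (real (Suc i))" t]
      by (simp add: ennreal_neg del: of_nat_Suc)
  qed
qed

lemma trunc_div_tendsto_1:
  assumes "t > 0"
  shows "(\<lambda>i. trunc (inverse (real (Suc i))) t / inverse (real (Suc i))) \<longlonglongrightarrow> 1"
proof (rule tendsto_eventually)
  obtain N :: nat where N: "1 < real N * t"
    using reals_Archimedean3[OF assms] by blast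
  have "1 \<le> real (Suc i) * t" if "N \<le> i" for i
  proof -
    have "real N * t \<le> real (Suc i) * t"
      using that assms by (intro mult_right_mono) auto
    then show ?thesis
      using N by linarith
  qed
  then have ge: "1 \<le> t / inverse (real (Suc i))" if "N \<le> i" for i
    using that by (simp add: divide_inverse mult.commute del: of_nat_Suc)
  show "\<forall>\<^sub>F i in sequentially. trunc (inverse (real (Suc i))) t / inverse (real (Suc i)) = 1"
    unfolding eventually_sequentially
  proof (intro exI allI impI)
    fix i
    assume "N \<le> i"
    have "trunc (inverse (real (Suc i))) t / inverse (real (Suc i))
        = min (t / inverse (real (Suc i))) 1"
      using assms by (intro trunc_div_eq_min) auto
    also have "\<dots> = 1"
      by (rule min_absorb2[OF ge[OF \<open>N \<le> i\<close>]])
    finally show "trunc (inverse (real (Suc i))) t / inverse (real (Suc i)) = 1" .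
  qed
qed

lemma nn_integral_trunc_div_tendsto:
  fixes w U :: "'a \<Rightarrow> real"
  assumes U: "U \<in> borel_measurable M" and w: "w \<in> borel_measurable M"
    and U_nonneg: "AE x in M. 0 \<le> U x" and w_0: "\<And>x. U x = 0 \<Longrightarrow> w x = 0"
  shows "(\<lambda>i. \<integral>\<^sup>+ x. ennreal (w x)
      * ennreal (trunc (inverse (real (Suc i))) (U x) / inverse (real (Suc i))) \<partial>M)
    \<longlonglongrightarrow> (\<integral>\<^sup>+ x. ennreal (w x) \<partial>M)"
proof -
  define r where "r i x = ennreal (trunc (inverse (real (Suc i))) (U x) / inverse (real (Suc i)))"
    for i x
  have "(\<lambda>i. \<integral>\<^sup>+ x. ennreal (w x) * r i x \<partial>M) \<longlonglongrightarrow> (\<integral>\<^sup>+ x. (if U x > 0 then ennreal (w x) else 0) \<partial>M)"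
  proof (rule nn_integral_LIMSEQ)
    show "incseq (\<lambda>i x. ennreal (w x) * r i x)"
      using incseq_ennreal_trunc_div unfolding r_def incseq_def le_fun_def
      by (auto intro: mult_left_mono)
    show "(\<lambda>x. ennreal (w x) * r i x) \<in> borel_measurable M" for i
      unfolding r_def trunc_def using U w by measurable
    show "(\<lambda>i. ennreal (w x) * r i x) \<longlonglongrightarrow> (if U x > 0 then ennreal (w x) else 0)" for x
    proof (cases "U x > 0")
      case True
      have "(\<lambda>i. r i x) \<longlonglongrightarrow> ennreal 1"
        unfolding r_def by (rule tendsto_ennrealI[OF trunc_div_tendsto_1[OF True]])
      then show ?thesis
        using ennreal_tendsto_cmult[of "ennreal (w x)"] True by fastforce
    next
      case False
      then have "r i x = 0" for i
        unfolding r_def using trunc_div_nonpos[of "inverse (real (Suc i))" "U x"]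
        by (simp add: ennreal_eq_0_iff del: of_nat_Suc)
      then show ?thesis
        using False by simp
    qed
  qed
  moreover have "AE x in M. (if U x > 0 then ennreal (w x) else 0) = ennreal (w x)"
    using U_nonneg by eventually_elim (auto simp: w_0)
  ultimately show ?thesis
    by (simp add: nn_integral_cong_AE r_def)
qed

lemma nn_integral_le_of_trunc_div_bound:
  fixes w :: "'j \<Rightarrow> 'a \<Rightarrow> real" and U :: "'a \<Rightarrow> real"
  assumes c: "c \<ge> 0" and U: "U \<in> borel_measurable M" and w: "\<And>j. w j \<in> borel_measurable M"
    and w_nonneg: "\<And>j. AE x in M. 0 \<le> w j x" and w_0: "\<And>j x. U x = 0 \<Longrightarrow> w j x = 0"
    and U_nonneg: "AE x in M. 0 \<le> U x"
    and bound: "\<And>s. s > 0 \<Longrightarrow> (\<Sum>j\<in>I. \<integral>\<^sup>+ x. ennreal (c * (w j x * (trunc s (U x) / s))) \<partial>M) \<le> C"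
  shows "ennreal c * (\<Sum>j\<in>I. \<integral>\<^sup>+ x. ennreal (w j x) \<partial>M) \<le> C"
proof (rule LIMSEQ_le_const2)
  let ?r = "\<lambda>i x. ennreal (trunc (inverse (real (Suc i))) (U x) / inverse (real (Suc i)))"
  show "(\<lambda>i. ennreal c * (\<Sum>j\<in>I. \<integral>\<^sup>+ x. ennreal (w j x) * ?r i x \<partial>M))
      \<longlonglongrightarrow> ennreal c * (\<Sum>j\<in>I. \<integral>\<^sup>+ x. ennreal (w j x) \<partial>M)"
    using nn_integral_trunc_div_tendsto[OF U w U_nonneg w_0]
    by (intro ennreal_tendsto_cmult tendsto_sum) auto
  have "(\<integral>\<^sup>+ x. ennreal (c * (w j x * (trunc s (U x) / s))) \<partial>M)
      = ennreal c * (\<integral>\<^sup>+ x. ennreal (w j x) * ?r i x \<partial>M)" if "s = inverse (real (Suc i))" for i j s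
  proof -
    have "AE x in M.
        ennreal (c * (w j x * (trunc s (U x) / s))) = ennreal c * (ennreal (w j x) * ?r i x)"
      using w_nonneg[of j] by eventually_elim (simp only: ennreal_mult'[OF c] ennreal_mult' that)
    moreover have "(\<lambda>x. ennreal (w j x) * ?r i x) \<in> borel_measurable M"
      unfolding trunc_def using U w[of j] by measurable
    ultimately show ?thesis
      by (simp add: nn_integral_cong_AE nn_integral_cmult)
  qed
  then show "\<exists>N. \<forall>i\<ge>N. ennreal c * (\<Sum>j\<in>I. \<integral>\<^sup>+ x. ennreal (w j x) * ?r i x \<partial>M) \<le> C"
    using bound[of "inverse (real (Suc _))"] by (simp add: sum_distrib_left del: of_nat_Suc)
qed
lemma integral_mono_nonneg_bound:
  fixes f g :: "'a \<Rightarrow> real"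
  assumes "integrable M g" "f \<in> borel_measurable M" "AE x in M. 0 \<le> f x \<and> f x \<le> g x"
  shows "integrable M f" "integral\<^sup>L M f \<le> integral\<^sup>L M g"
proof -
  show f: "integrable M f"
    using assms(3) by (intro Bochner_Integration.integrable_bound[OF assms(1,2)]) auto
  show "integral\<^sup>L M f \<le> integral\<^sup>L M g"
    using assms(3) by (intro integral_mono_AE[OF f assms(1)]) auto
qed

lemma integral_mult_trunc_le:
  assumes f: "integrable M f" "AE x in M. 0 \<le> f x"
    and U: "U \<in> borel_measurable M" "AE x in M. 0 \<le> U x" and s: "s > 0"
  shows "integral\<^sup>L M (\<lambda>x. f x * trunc s (U x)) \<le> s * integral\<^sup>L M f"
proof -
  have "integral\<^sup>L M (\<lambda>x. f x * trunc s (U x)) \<le> integral\<^sup>L M (\<lambda>x. s * f x)"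
  proof (rule integral_mono_AE)
    have "(\<lambda>x. trunc s (U x)) \<in> borel_measurable M"
      unfolding trunc_def using U(1) by measurable
    then show "integrable M (\<lambda>x. f x * trunc s (U x))"
      using integrable_mult_bounded[OF f(1) _ abs_trunc_le(2)[OF s]] by blast
    show "AE x in M. f x * trunc s (U x) \<le> s * f x"
      using f(2) U(2)
    proof eventually_elim
      case (elim x)
      then have "trunc s (U x) \<le> s"
        using trunc_bounds_of_nonneg[OF s] by blast
      from mult_left_mono[OF this elim(1)] show ?case
        by (simp add: mult.commute)
    qed
  qed (use f in simp)
  then show ?thesis
    by simp
qed

lemma trunc_lower_order_bound:
  fixes U :: "real^'n \<Rightarrow> real" and D :: "'n \<Rightarrow> real^'n \<Rightarrow> real"
  assumes \<Omega>: "\<Omega> \<in> lmeasurable" and U: "W01p \<Omega> p U D" and p: "\<And>j. p j \<ge> 2"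
    and eq: "solves_weakly \<Omega> p A B g D"
    and g: "integrable (lebesgue_on \<Omega>) g" and f: "integrable (lebesgue_on \<Omega>) f"
    and g_le_f: "AE x in lebesgue_on \<Omega>. g x \<le> f x" and U_nonneg: "AE x in lebesgue_on \<Omega>. 0 \<le> U x"
    and f_nonneg: "AE x in lebesgue_on \<Omega>. 0 \<le> f x"
    and A_nonneg: "AE x in lebesgue_on \<Omega>. 0 \<le> A x"
    and s: "s > 0" and \<mu>: "\<mu> > 0" and w: "\<And>j. w j \<in> borel_measurable (lebesgue_on \<Omega>)"
    and w_B: "\<And>j. AE x in lebesgue_on \<Omega>. 0 \<le> w j x \<and> \<mu> * w j x \<le> B j x"
  shows "(\<Sum>j\<in>UNIV. \<integral>\<^sup>+ x. ennreal (\<mu> * (w j x * (trunc s (U x) / s))) \<partial>lebesgue_on \<Omega>)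
    \<le> (\<integral>\<^sup>+ x. ennreal (f x) \<partial>lebesgue_on \<Omega>)"
proof -
  let ?M = "lebesgue_on \<Omega>"
  let ?T = "\<lambda>x. trunc s (U x)"
  note E = trunc_energy_inequality[OF \<Omega> U p eq s g f g_le_f U_nonneg]
  have "0 \<le> (\<Sum>j\<in>UNIV. integral\<^sup>L ?M (\<lambda>x. A x * \<bar>if \<bar>U x\<bar> \<le> s then D j x else 0\<bar> powr p j))"
    using A_nonneg by (intro sum_nonneg integral_nonneg_AE) (auto elim: eventually_mono)
  then have "(\<Sum>j\<in>UNIV. integral\<^sup>L ?M (\<lambda>x. B j x * ?T x)) \<le> integral\<^sup>L ?M (\<lambda>x. f x * ?T x)"
    using E by linarith
  also have "\<dots> \<le> s * integral\<^sup>L ?M f"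
    using borel_measurable_integrable[OF W01p_integrable(1)[OF U]]
    by (rule integral_mult_trunc_le[OF f f_nonneg _ U_nonneg s])
  finally have BT: "(\<Sum>j\<in>UNIV. integral\<^sup>L ?M (\<lambda>x. B j x * ?T x / s)) \<le> integral\<^sup>L ?M f"
    using s by (simp add: sum_divide_distrib[symmetric] pos_divide_le_eq mult.commute)
  have le: "AE x in ?M. 0 \<le> \<mu> * (w j x * (?T x / s)) \<and> \<mu> * (w j x * (?T x / s)) \<le> B j x * ?T x / s"
    for j
    using w_B[of j] U_nonneg
  proof eventually_elim
    case (elim x)
    then have "\<mu> * w j x * ?T x \<le> B j x * ?T x"
      using trunc_bounds_of_nonneg[OF s] by (intro mult_right_mono) auto
    then show ?case
      using elim \<mu> s trunc_bounds_of_nonneg[OF s, of "U x"]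
      by (simp add: divide_right_mono mult.assoc)
  qed
  moreover have "integrable ?M (\<lambda>x. B j x * ?T x / s)" for j
    using E by simp
  moreover have "(\<lambda>x. \<mu> * (w j x * (?T x / s))) \<in> borel_measurable ?M" for j
    using w[of j] W01p_trunc_measurable[OF U] by measurable
  ultimately have w_T: "integrable ?M (\<lambda>x. \<mu> * (w j x * (?T x / s)))"
    "integral\<^sup>L ?M (\<lambda>x. \<mu> * (w j x * (?T x / s))) \<le> integral\<^sup>L ?M (\<lambda>x. B j x * ?T x / s)" for j
    using integral_mono_nonneg_bound by blast+
  show ?thesis
  proof (rule sum_nn_integral_le_of_integral_le)
    show "(\<Sum>j\<in>UNIV. integral\<^sup>L ?M (\<lambda>x. \<mu> * (w j x * (?T x / s)))) \<le> integral\<^sup>L ?M f"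
      using sum_mono[OF w_T(2)] BT by (rule order_trans)
  qed (use w_T le f f_nonneg in \<open>auto elim: eventually_mono\<close>)
qed

lemma trunc_lower_order_estimate:
  fixes U :: "real^'n \<Rightarrow> real" and D :: "'n \<Rightarrow> real^'n \<Rightarrow> real"
  assumes \<Omega>: "\<Omega> \<in> lmeasurable" and U: "W01p \<Omega> p U D" and p: "\<And>j. p j \<ge> 2"
    and eq: "solves_weakly \<Omega> p A B g D"
    and g: "integrable (lebesgue_on \<Omega>) g" and f: "integrable (lebesgue_on \<Omega>) f"
    and g_le_f: "AE x in lebesgue_on \<Omega>. g x \<le> f x" and U_nonneg: "AE x in lebesgue_on \<Omega>. 0 \<le> U x"
    and f_nonneg: "AE x in lebesgue_on \<Omega>. 0 \<le> f x"
    and A_nonneg: "AE x in lebesgue_on \<Omega>. 0 \<le> A x"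
    and \<mu>: "\<mu> > 0" and w: "\<And>j. w j \<in> borel_measurable (lebesgue_on \<Omega>)"
    and w_B: "\<And>j. AE x in lebesgue_on \<Omega>. 0 \<le> w j x \<and> \<mu> * w j x \<le> B j x"
    and w_0: "\<And>j x. U x = 0 \<Longrightarrow> w j x = 0"
  shows "ennreal \<mu> * (\<Sum>j\<in>UNIV. \<integral>\<^sup>+ x. ennreal (w j x) \<partial>lebesgue_on \<Omega>)
    \<le> (\<integral>\<^sup>+ x. ennreal (f x) \<partial>lebesgue_on \<Omega>)"
proof (rule nn_integral_le_of_trunc_div_bound[where U = U])
  show "0 \<le> \<mu>" "U \<in> borel_measurable (lebesgue_on \<Omega>)" "AE x in lebesgue_on \<Omega>. 0 \<le> U x"
    using \<mu> borel_measurable_integrable[OF W01p_integrable(1)[OF U]] U_nonneg by auto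
  show "AE x in lebesgue_on \<Omega>. 0 \<le> w j x" for j
    using w_B[of j] by eventually_elim simp
qed (use trunc_lower_order_bound[OF \<Omega> U p eq g f g_le_f U_nonneg f_nonneg A_nonneg _ \<mu> w w_B]
    w w_0 in auto)

theorem lemma3:
  fixes \<Omega> :: "(real^'n) set"
    and q \<theta> \<alpha> \<beta> \<mu> \<nu> :: real
    and p :: "'n \<Rightarrow> real"
    and ord :: "nat \<Rightarrow> 'n"
    and f a b :: "real^'n \<Rightarrow> real"
    and u :: "nat \<Rightarrow> real^'n \<Rightarrow> real"
    and Du :: "nat \<Rightarrow> 'n \<Rightarrow> real^'n \<Rightarrow> real"
  assumes N3: "CARD('n) \<ge> 3"
    and open_\<Omega>: "open \<Omega>" and bdd_\<Omega>: "bounded \<Omega>"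
    and q: "q > 0" and \<theta>: "0 < \<theta>" "\<theta> < 1"
    and f_L1: "integrable (lebesgue_on \<Omega>) f"
    and f_nonneg: "AE x in lebesgue_on \<Omega>. f x \<ge> 0"
    and f_nonzero: "\<not> (AE x in lebesgue_on \<Omega>. f x = 0)"
    and ord: "bij_betw ord {1..CARD('n)} UNIV"
    and p_sorted: "\<And>i i'. 1 \<le> i \<Longrightarrow> i \<le> i' \<Longrightarrow> i' \<le> CARD('n) \<Longrightarrow> p (ord i) \<le> p (ord i')"
    and p_ge2: "\<And>j. p j \<ge> 2"
    and pbar: "2 \<le> real CARD('n) / (\<Sum>j\<in>UNIV. 1 / p j)"
              "real CARD('n) / (\<Sum>j\<in>UNIV. 1 / p j) < real CARD('n)"
    and a_meas: "a \<in> borel_measurable (lebesgue_on \<Omega>)"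
    and b_meas: "b \<in> borel_measurable (lebesgue_on \<Omega>)"
    and \<alpha>: "0 < \<alpha>" and a_bds: "AE x in lebesgue_on \<Omega>. \<alpha> \<le> a x \<and> a x \<le> \<beta>"
    and \<mu>: "0 < \<mu>" and b_bds: "AE x in lebesgue_on \<Omega>. \<mu> \<le> b x \<and> b x \<le> \<nu>"
    and u_W: "\<And>n. n \<ge> 1 \<Longrightarrow> W01p \<Omega> p (u n) (Du n)"
    and u_nonneg: "\<And>n. n \<ge> 1 \<Longrightarrow> AE x in lebesgue_on \<Omega>. u n x \<ge> 0"
    and u_eq: "\<And>n \<phi> D\<phi>. n \<ge> 1 \<Longrightarrow> W01p \<Omega> p \<phi> D\<phi> \<Longrightarrow> Linf \<Omega> \<phi> \<Longrightarrow>
        (\<forall>j. integrable (lebesgue_on \<Omega>) (\<lambda>x. (a x + u n x powr q) *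
                 \<bar>Du n j x\<bar> powr (p j - 2) * Du n j x * D\<phi> j x)) \<and>
        (\<forall>j. integrable (lebesgue_on \<Omega>) (\<lambda>x. b x * (u n x * \<bar>Du n j x\<bar> powr (p j)) /
                 (u n x + 1 / real n) powr (\<theta> + 1) * \<phi> x)) \<and>
        (\<Sum>j\<in>UNIV. LINT x:\<Omega>|lebesgue. (a x + u n x powr q) *
                 \<bar>Du n j x\<bar> powr (p j - 2) * Du n j x * D\<phi> j x)
        + (\<Sum>j\<in>UNIV. LINT x:\<Omega>|lebesgue. b x * (u n x * \<bar>Du n j x\<bar> powr (p j)) /
                 (u n x + 1 / real n) powr (\<theta> + 1) * \<phi> x)
        = (LINT x:\<Omega>|lebesgue. trunc (real n) (f x) * \<phi> x)"
  shows "\<forall>n\<ge>1. \<forall>k>0.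
     ennreal \<mu> * (\<Sum>j\<in>UNIV. \<integral>\<^sup>+ x. ennreal (u n x * \<bar>Du n j x\<bar> powr (p j) /
                 (u n x + 1 / real n) powr (\<theta> + 1)) \<partial>(lebesgue_on \<Omega>))
       \<le> (\<integral>\<^sup>+ x. ennreal (f x) \<partial>(lebesgue_on \<Omega>))
   \<and> (\<exists>G :: 'n \<Rightarrow> real^'n \<Rightarrow> real. (\<forall>j. weak_pderiv \<Omega> j (\<lambda>x. trunc k (u n x)) (G j)) \<and>
       ennreal (1 / k) * (\<Sum>j\<in>UNIV. \<integral>\<^sup>+ x. ennreal ((a x + u n x powr q) * \<bar>G j x\<bar> powr (p j))
                 \<partial>(lebesgue_on \<Omega>))
       \<le> (\<integral>\<^sup>+ x. ennreal (f x * trunc k (u n x) / k) \<partial>(lebesgue_on \<Omega>)))"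
proof (intro allI impI)
  fix n :: nat and k :: real
  assume n: "1 \<le> n" and k: "0 < k"
  let ?M = "lebesgue_on \<Omega>"
  let ?A = "\<lambda>x. a x + u n x powr q"
  let ?w = "\<lambda>j x. u n x * \<bar>Du n j x\<bar> powr p j / (u n x + 1 / real n) powr (\<theta> + 1)"
  let ?B = "\<lambda>j x. b x * (u n x * \<bar>Du n j x\<bar> powr p j) / (u n x + 1 / real n) powr (\<theta> + 1)"
  let ?g = "\<lambda>x. trunc (real n) (f x)"
  have \<Omega>: "\<Omega> \<in> lmeasurable"
    using lmeasurable_open[OF bdd_\<Omega> open_\<Omega>] .
  have eq: "solves_weakly \<Omega> p ?A ?B ?g (Du n)"
    unfolding solves_weakly_def using u_eq[OF n] by blast
  have g: "integrable ?M ?g"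
    using integrable_trunc[OF f_L1] n by simp
  have g_le_f: "AE x in ?M. ?g x \<le> f x"
    using f_nonneg by eventually_elim (simp add: trunc_def)
  have A_nonneg: "AE x in ?M. 0 \<le> ?A x"
    using a_bds by eventually_elim (use \<alpha> in simp)
  have w_B: "AE x in ?M. 0 \<le> ?w j x \<and> \<mu> * ?w j x \<le> ?B j x" for j
    using b_bds u_nonneg[OF n] by eventually_elim (simp add: mult_right_mono divide_right_mono)
  have B_nonneg: "AE x in ?M. 0 \<le> ?B j x" for j
    using w_B[of j] by eventually_elim (metis \<mu> less_imp_le mult_nonneg_nonneg order_trans)
  have w: "?w j \<in> borel_measurable ?M" for j
    using borel_measurable_integrable[OF W01p_integrable(1)[OF u_W[OF n]]]
      borel_measurable_integrable[OF W01p_integrable(2)[OF u_W[OF n]]] by measurable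
  show "ennreal \<mu> * (\<Sum>j\<in>UNIV. \<integral>\<^sup>+ x. ennreal (?w j x) \<partial>?M) \<le> (\<integral>\<^sup>+ x. ennreal (f x) \<partial>?M)
    \<and> (\<exists>G. (\<forall>j. weak_pderiv \<Omega> j (\<lambda>x. trunc k (u n x)) (G j)) \<and>
      ennreal (1 / k) * (\<Sum>j\<in>UNIV. \<integral>\<^sup>+ x. ennreal (?A x * \<bar>G j x\<bar> powr p j) \<partial>?M)
        \<le> (\<integral>\<^sup>+ x. ennreal (f x * trunc k (u n x) / k) \<partial>?M))"
    using trunc_lower_order_estimate[OF \<Omega> u_W[OF n] p_ge2 eq g f_L1 g_le_f u_nonneg[OF n] f_nonneg
        A_nonneg \<mu> w w_B]
      trunc_gradient_estimate[OF \<Omega> u_W[OF n] p_ge2 eq k g f_L1 g_le_f u_nonneg[OF n] f_nonneg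
        A_nonneg B_nonneg]
    by simp
qed

end
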